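(* Let $0<\mu_1<\mu_2$, $\alpha\in(0,1)$, $\delta\ge0$, $\sigma\in(0,1/2)$. Let $c_0:[0,+\infty)\to(0,+\infty)$ be of class $C^3$ with $\mu_1\le c_0(t)\le\mu_2$ for all $t\ge0$ and $$\sup_{t\ge0}\big(|c_0'(t)|+|c_0''(t)|+|c_0'''(t)|\big)<+\infty.$$ Let $\{\lambda_n\},\{\varepsilon_n\}$ be sequences of positive reals with $\lambda_n\to+\infty$, $\varepsilon_n\to0$, and $\limsup_{n\to\infty}\varepsilon_n\lambda_n^\alpha<+\infty$. Define $c_n(t):=\gamma(\varepsilon_n,\lambda_n,t)$, where $$\gamma(\varepsilon,\lambda,t):=c_0(t)-\varepsilon\sin(2a)-\frac{\varepsilon^2}{4}\frac{\sin^4 a}{c_0(t)}-\frac{5}{16\lambda^2}\Big[\frac{c_0'(t)}{c_0(t)}\Big]^2+\frac{\varepsilon}{2\lambda}\frac{c_0'(t)}{c_0(t)^{3/2}}\sin^2 a+\frac{1}{4\lambda^2}\frac{c_0''(t)}{c_0(t)}+\frac{\delta^2}{\lambda^{2-4\sigma}},\quad a=a(\lambda,t):=\lambda\int_0^tc_0(s)^{1/2}ds,$$ and let $w_n$ be the solution of $w_n''+2\delta\lambda_n^{2\sigma}w_n'+\lambda_n^2c_n(t)w_n=0$ on $[0,+\infty)$ with $w_n(0)=0$, $w_n'(0)=1$. Set $$\mu_3:=\frac{\mu_1\min\{1,\mu_1\}}{2\mu_2^2},\qquad\mu_4:=\frac{1}{4\mu_2^{1/2}}.$$ Then: (i) $c_n\to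 c_0$ uniformly on $[0,+\infty)$; (ii) $\displaystyle\limsup_{n\to\infty}\operatorname{Hold}_\alpha(c_n)\le\max\Big\{\operatorname{Hold}_\alpha(c_0),\ 2\mu_2^{\alpha/2}\limsup_{n\to\infty}(\varepsilon_n\lambda_n^\alpha)\Big\}$; (iii) for every $n$ large enough, $$|w_n'(t)|^2+\lambda_n^2|w_n(t)|^2\ge\mu_3\exp\big(\mu_4\varepsilon_n\lambda_n t-2\delta\lambda_n^{2\sigma}t\big)\qquad\forall t\ge0.$$
   Context: For $c:[0,+\infty)\to\mathbb{R}$, $\operatorname{Hold}_\alpha(c):=\sup\{|c(t)-c(s)|/|t-s|^\alpha:\ t,s\ge0,\ t\neq s\}$. *)

theory Defs
  imports "HOL-Analysis.Analysis"
begin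

definition Hold :: "real \<Rightarrow> (real \<Rightarrow> real) \<Rightarrow> ereal" where
  "Hold \<alpha> c = (SUP p \<in> {(t, s). t \<ge> 0 \<and> s \<ge> 0 \<and> t \<noteq> s}.
       ereal (\<bar>c (fst p) - c (snd p)\<bar> / \<bar>fst p - snd p\<bar> powr \<alpha>))"

definition phase :: "(real \<Rightarrow> real) \<Rightarrow> real \<Rightarrow> real \<Rightarrow> real" where
  "phase c0 lm t = lm * integral {0..t} (\<lambda>s. sqrt (c0 s))"

text \<open>gamma(eps,lambda,t); c1, c2 stand for the first and second derivatives of c0.\<close>
definition gamma :: "(real \<Rightarrow> real) \<Rightarrow> (real \<Rightarrow> real) \<Rightarrow> (real \<Rightarrow> real) \<Rightarrow> real \<Rightarrow> real
    \<Rightarrow> real \<Rightarrow> real \<Rightarrow> real \<Rightarrow> real" where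
  "gamma c0 c1 c2 \<delta> \<sigma> \<epsilon> lm t =
     (let a = phase c0 lm t in
       c0 t - \<epsilon> * sin (2 * a) - \<epsilon>\<^sup>2 / 4 * (sin a ^ 4 / c0 t)
       - 5 / (16 * lm\<^sup>2) * (c1 t / c0 t)\<^sup>2
       + \<epsilon> / (2 * lm) * (c1 t / c0 t powr (3/2)) * (sin a)\<^sup>2
       + 1 / (4 * lm\<^sup>2) * (c2 t / c0 t)
       + \<delta>\<^sup>2 / lm powr (2 - 4 * \<sigma>))"

end

theory Submission
  imports Defs
begin

text \<open>Apart from \<open>c0\<close> and \<open>- \<epsilon> sin 2a\<close>, every term of \<open>\<gamma>\<close> is uniformly
  \<open>O(\<epsilon>\<^sup>2 + \<epsilon>/\<lambda> + 1/\<lambda>\<^sup>2 + \<delta>\<^sup>2\<lambda>\<^bsup>4\<sigma>-2\<^esup>)\<close>, which gives (i). These terms are products of bounded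
  functions that are Lipschitz with constant \<open>O(\<lambda>)\<close>, hence \<open>\<alpha>\<close>-Hoelder with constant \<open>O(\<lambda>\<^sup>\<alpha>)\<close>,
  while interpolating between \<open>|sin 2a| \<le> 1\<close> and \<open>|(sin 2a)'| \<le> 2\<lambda>\<surd>\<mu>2\<close> shows that \<open>\<epsilon> sin 2a\<close> is
  Hoelder with constant \<open>2\<mu>2\<^bsup>\<alpha>/2\<^esup>\<epsilon>\<lambda>\<^sup>\<alpha>\<close>; this gives (ii).

  For (iii), \<open>\<gamma>\<close> is designed so that \<open>w'' + 2Dw' + \<lambda>\<^sup>2\<gamma>w = 0\<close>, with damping \<open>D = \<delta>\<lambda>\<^bsup>2\<sigma>\<^esup>\<close>, has
  the explicit solution \<open>w = A sin a\<close> with \<open>A \<sim> exp (\<theta> t - D t) c0\<^bsup>-1/4\<^esup>\<close> and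
  \<open>\<theta>' = (\<epsilon>\<lambda>/2) sin\<^sup>2a / \<surd>c0\<close>; by uniqueness it is \<open>w\<^sub>n\<close>. Since \<open>sin\<^sup>2a\<close> averages to \<open>1/2\<close> along
  the phase, \<open>\<theta> t \<ge> \<epsilon>\<lambda>t/(8\<surd>\<mu>2) - O(1)\<close>, and the energy \<open>w'\<^sup>2 + \<lambda>\<^sup>2w\<^sup>2\<close> is comparable to
  \<open>\<lambda>\<^sup>2A\<^sup>2\<close> once \<open>\<lambda>\<close> is large.\<close>

lemma integral_has_real_derivative_atLeast:
  fixes f :: "real \<Rightarrow> real"
  assumes "continuous_on {a..} f" "a \<le> t"
  shows "((\<lambda>x. integral {a..x} f) has_real_derivative f t) (at t within {a..})"
proof -
  have "continuous_on {a..t+1} f" using assms(1) by (rule continuous_on_subset) auto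
  then have "((\<lambda>x. integral {a..x} f) has_real_derivative f t) (at t within {a..t+1})"
    by (rule integral_has_real_derivative) (use assms(2) in auto)
  moreover have "at t within {a..t+1} = at t within {a..}"
    by (rule at_within_nhd[where S="{t - 1 <..< t + 1}"]) auto
  ultimately show ?thesis by simp
qed

lemma deriv_nonneg_imp_increasing_atLeast:
  fixes f f' :: "real \<Rightarrow> real"
  assumes deriv: "\<And>x. a \<le> x \<Longrightarrow> (f has_real_derivative f' x) (at x within {a..})"
    and nonneg: "\<And>x. a \<le> x \<Longrightarrow> 0 \<le> f' x"
    and "a \<le> s" "s \<le> t"
  shows "f s \<le> f t"
proof (rule DERIV_nonneg_imp_increasing_open[OF \<open>s \<le> t\<close>])
  fix x assume x: "s < x" "x < t"
  then have "at x within {a..} = at x" using \<open>a \<le> s\<close> by (intro at_within_interior) auto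
  then show "\<exists>y. DERIV f x :> y \<and> 0 \<le> y" using deriv[of x] nonneg[of x] x \<open>a \<le> s\<close> by auto
next
  have "continuous_on {a..} f" by (rule DERIV_continuous_on) (use deriv in auto)
  then show "continuous_on {s..t} f" by (rule continuous_on_subset) (use \<open>a \<le> s\<close> in auto)
qed

lemma deriv_bounded_imp_lipschitz_atLeast:
  fixes f f' :: "real \<Rightarrow> real"
  assumes deriv: "\<And>x. a \<le> x \<Longrightarrow> (f has_real_derivative f' x) (at x within {a..})"
    and bound: "\<And>x. a \<le> x \<Longrightarrow> \<bar>f' x\<bar> \<le> L"
    and "a \<le> s" "a \<le> t"
  shows "\<bar>f t - f s\<bar> \<le> L * \<bar>t - s\<bar>"
proof -
  have ordered: "\<bar>f y - f x\<bar> \<le> L * (y - x)" if "a \<le> x" "x \<le> y" for x y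
  proof -
    have "L * x - f x \<le> L * y - f y"
      by (rule deriv_nonneg_imp_increasing_atLeast[where f="\<lambda>t. L * t - f t" and f'="\<lambda>t. L - f' t"])
        (use that bound in \<open>force intro!: derivative_eq_intros deriv simp: abs_le_iff\<close>)+
    moreover have "L * x + f x \<le> L * y + f y"
      by (rule deriv_nonneg_imp_increasing_atLeast[where f="\<lambda>t. L * t + f t" and f'="\<lambda>t. L + f' t"])
        (use that bound in \<open>force intro!: derivative_eq_intros deriv simp: abs_le_iff\<close>)+
    ultimately show ?thesis by (auto simp: algebra_simps abs_le_iff)
  qed
  show ?thesis
    using ordered[of s t] ordered[of t s] assms(3,4) by (cases "s \<le> t") (auto simp: abs_minus_commute)
qed

lemma le_powr_interpolation:
  fixes v a b \<alpha> :: real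
  assumes "v \<le> a" "v \<le> b" "0 \<le> v" "0 \<le> \<alpha>" "\<alpha> \<le> 1"
  shows "v \<le> a powr (1 - \<alpha>) * b powr \<alpha>"
proof (cases "v = 0")
  case False
  then have "v = v powr (1 - \<alpha>) * v powr \<alpha>" using assms(3) by (simp add: powr_add[symmetric])
  also have "\<dots> \<le> a powr (1 - \<alpha>) * b powr \<alpha>" using assms by (intro mult_mono powr_mono2) auto
  finally show ?thesis .
qed simp

lemma damped_linear_ode_zero_data:
  fixes u u' q :: "real \<Rightarrow> real" and c Q t :: real
  assumes c: "0 \<le> c" and q: "\<And>t. 0 \<le> t \<Longrightarrow> \<bar>q t\<bar> \<le> Q"
    and u: "\<And>t. 0 \<le> t \<Longrightarrow> (u has_real_derivative u' t) (at t within {0..})"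
    and u': "\<And>t. 0 \<le> t \<Longrightarrow> (u' has_real_derivative (- c * u' t - q t * u t)) (at t within {0..})"
    and zero: "u 0 = 0" "u' 0 = 0"
    and "0 \<le> t"
  shows "u t = 0 \<and> u' t = 0"
proof -
  define C where "C = 1 + Q"
  define E where "E = (\<lambda>t. (u' t)\<^sup>2 + (u t)\<^sup>2)"
  define E' where "E' = (\<lambda>t. 2 * u' t * (- c * u' t - q t * u t) + 2 * u t * u' t)"
  have E'_le: "E' t \<le> C * E t" if "0 \<le> t" for t
  proof -
    have "2 * ((1 - q t) * (u t * u' t)) \<le> \<bar>1 - q t\<bar> * (2 * \<bar>u t * u' t\<bar>)"
      by (metis abs_ge_self abs_mult mult.left_commute mult_le_cancel_left_pos zero_less_numeral)
    also have "\<dots> \<le> C * E t"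
    proof (rule mult_mono)
      show "\<bar>1 - q t\<bar> \<le> C" using q[OF that] unfolding C_def by linarith
      have "0 \<le> (\<bar>u t\<bar> - \<bar>u' t\<bar>)\<^sup>2" by simp
      then show "2 * \<bar>u t * u' t\<bar> \<le> E t" unfolding E_def by (simp add: power2_diff abs_mult)
    qed (use q[OF that] in \<open>auto simp: C_def\<close>)
    moreover have "0 \<le> c * (u' t)\<^sup>2" using c by simp
    ultimately show ?thesis
      unfolding E'_def by (simp add: algebra_simps power2_eq_square)
  qed
  \<comment> \<open>Gronwall: the weighted energy \<open>exp (- C t) E t\<close> is nonincreasing.\<close>
  have "- (exp (- C * 0) * E 0) \<le> - (exp (- C * t) * E t)"
  proof (rule deriv_nonneg_imp_increasing_atLeast[OF _ _ order_refl \<open>0 \<le> t\<close>])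
    show "((\<lambda>t. - (exp (- C * t) * E t)) has_real_derivative
        exp (- C * x) * (C * E x - E' x)) (at x within {0..})" if "0 \<le> x" for x
      unfolding E_def E'_def
      by (rule u[OF that] u'[OF that] derivative_eq_intros refl | simp add: algebra_simps)+
    show "0 \<le> exp (- C * x) * (C * E x - E' x)" if "0 \<le> x" for x
      using E'_le[OF that] by simp
  qed
  then have "E t \<le> 0" using zero unfolding E_def by (simp add: mult_le_0_iff)
  then show ?thesis unfolding E_def by (smt (verit) zero_le_power2 zero_eq_power2)
qed

text \<open>Families \<open>u \<lambda>\<close> on \<open>[0,\<infinity>)\<close>, \<open>\<lambda> \<ge> 1\<close>, that are bounded uniformly in \<open>\<lambda>\<close> and Lipschitz with
  constant \<open>O(\<lambda>)\<close>: the regularity of every \<open>\<lambda>\<close>-dependent ingredient of \<open>\<gamma>\<close>, such as \<open>sin a(\<lambda>,t)\<close>.\<close>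

definition bounded_lipschitz_family :: "(real \<Rightarrow> real \<Rightarrow> real) \<Rightarrow> bool" where
  "bounded_lipschitz_family u \<longleftrightarrow> (\<exists>B L. 0 \<le> L \<and> (\<forall>lm\<ge>1. \<forall>t\<ge>0. \<bar>u lm t\<bar> \<le> B \<and>
      (\<forall>s\<ge>0. \<bar>u lm t - u lm s\<bar> \<le> L * lm * \<bar>t - s\<bar>)))"

lemma bounded_lipschitz_familyI:
  assumes "0 \<le> L" "\<And>lm t. 1 \<le> lm \<Longrightarrow> 0 \<le> t \<Longrightarrow> \<bar>u lm t\<bar> \<le> B"
    and "\<And>lm t s. 1 \<le> lm \<Longrightarrow> 0 \<le> t \<Longrightarrow> 0 \<le> s \<Longrightarrow> \<bar>u lm t - u lm s\<bar> \<le> L * lm * \<bar>t - s\<bar>"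
  shows "bounded_lipschitz_family u"
  unfolding bounded_lipschitz_family_def using assms by blast

lemma bounded_lipschitz_familyE:
  assumes "bounded_lipschitz_family u"
  obtains B L where "0 \<le> B" "0 \<le> L" "\<And>lm t. 1 \<le> lm \<Longrightarrow> 0 \<le> t \<Longrightarrow> \<bar>u lm t\<bar> \<le> B"
    and "\<And>lm t s. 1 \<le> lm \<Longrightarrow> 0 \<le> t \<Longrightarrow> 0 \<le> s \<Longrightarrow> \<bar>u lm t - u lm s\<bar> \<le> L * lm * \<bar>t - s\<bar>"
proof -
  obtain B L where "0 \<le> L" and u: "\<forall>lm\<ge>1. \<forall>t\<ge>0. \<bar>u lm t\<bar> \<le> B \<and>
      (\<forall>s\<ge>0. \<bar>u lm t - u lm s\<bar> \<le> L * lm * \<bar>t - s\<bar>)"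
    using assms unfolding bounded_lipschitz_family_def by blast
  moreover have "0 \<le> B" using u[rule_format, of 1 0] by linarith
  ultimately show ?thesis using that by blast
qed

lemma bounded_lipschitz_family_const:
  assumes "\<And>t. 0 \<le> t \<Longrightarrow> \<bar>f t\<bar> \<le> B" "\<And>t s. 0 \<le> t \<Longrightarrow> 0 \<le> s \<Longrightarrow> \<bar>f t - f s\<bar> \<le> L * \<bar>t - s\<bar>"
  shows "bounded_lipschitz_family (\<lambda>lm. f)"
proof (rule bounded_lipschitz_familyI)
  show "0 \<le> L" using assms(2)[of 1 0] by simp
  then show "\<bar>f t - f s\<bar> \<le> L * lm * \<bar>t - s\<bar>" if "1 \<le> lm" "0 \<le> t" "0 \<le> s" for lm t s
    using assms(2)[OF that(2,3)] mult_right_mono[OF mult_left_mono[OF that(1)], of L "\<bar>t - s\<bar>"]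
    by simp
qed (use assms(1) in auto)

lemma bounded_lipschitz_family_mult:
  assumes "bounded_lipschitz_family f" "bounded_lipschitz_family g"
  shows "bounded_lipschitz_family (\<lambda>lm t. f lm t * g lm t)"
proof -
  obtain B1 L1 where B1: "0 \<le> B1" "0 \<le> L1" and f: "\<And>lm t. 1 \<le> lm \<Longrightarrow> 0 \<le> t \<Longrightarrow> \<bar>f lm t\<bar> \<le> B1"
    "\<And>lm t s. 1 \<le> lm \<Longrightarrow> 0 \<le> t \<Longrightarrow> 0 \<le> s \<Longrightarrow> \<bar>f lm t - f lm s\<bar> \<le> L1 * lm * \<bar>t - s\<bar>"
    using assms(1) by (rule bounded_lipschitz_familyE) blast
  obtain B2 L2 where B2: "0 \<le> B2" "0 \<le> L2" and g: "\<And>lm t. 1 \<le> lm \<Longrightarrow> 0 \<le> t \<Longrightarrow> \<bar>g lm t\<bar> \<le> B2"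
    "\<And>lm t s. 1 \<le> lm \<Longrightarrow> 0 \<le> t \<Longrightarrow> 0 \<le> s \<Longrightarrow> \<bar>g lm t - g lm s\<bar> \<le> L2 * lm * \<bar>t - s\<bar>"
    using assms(2) by (rule bounded_lipschitz_familyE) blast
  show ?thesis
  proof (rule bounded_lipschitz_familyI[where B="B1 * B2" and L="B1 * L2 + B2 * L1"])
    fix lm t s :: real assume lts: "1 \<le> lm" "0 \<le> t" "0 \<le> s"
    have "f lm t * g lm t - f lm s * g lm s = f lm t * (g lm t - g lm s) + g lm s * (f lm t - f lm s)"
      by (simp add: algebra_simps)
    then have "\<bar>f lm t * g lm t - f lm s * g lm s\<bar>
        \<le> \<bar>f lm t\<bar> * \<bar>g lm t - g lm s\<bar> + \<bar>g lm s\<bar> * \<bar>f lm t - f lm s\<bar>"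
      by (metis abs_mult abs_triangle_ineq)
    also have "\<dots> \<le> B1 * (L2 * lm * \<bar>t - s\<bar>) + B2 * (L1 * lm * \<bar>t - s\<bar>)"
      using f g lts B1 B2 by (intro add_mono mult_mono) auto
    finally show "\<bar>f lm t * g lm t - f lm s * g lm s\<bar> \<le> (B1 * L2 + B2 * L1) * lm * \<bar>t - s\<bar>"
      by (simp add: algebra_simps)
  next
    show "\<bar>f lm t * g lm t\<bar> \<le> B1 * B2" if "1 \<le> lm" "0 \<le> t" for lm t
      unfolding abs_mult using f(1)[OF that] g(1)[OF that] by (intro mult_mono) auto
  qed (use B1 B2 in auto)
qed

lemma bounded_lipschitz_family_inverse:
  assumes "bounded_lipschitz_family f" "0 < m" and ge: "\<And>lm t. 1 \<le> lm \<Longrightarrow> 0 \<le> t \<Longrightarrow> m \<le> f lm t"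
  shows "bounded_lipschitz_family (\<lambda>lm t. 1 / f lm t)"
proof -
  obtain B L where "0 \<le> L"
    and f: "\<And>lm t s. 1 \<le> lm \<Longrightarrow> 0 \<le> t \<Longrightarrow> 0 \<le> s \<Longrightarrow> \<bar>f lm t - f lm s\<bar> \<le> L * lm * \<bar>t - s\<bar>"
    using assms(1) by (rule bounded_lipschitz_familyE) blast
  show ?thesis
  proof (rule bounded_lipschitz_familyI[where B="1 / m" and L="L / m\<^sup>2"])
    fix lm t s :: real assume lts: "1 \<le> lm" "0 \<le> t" "0 \<le> s"
    have m: "m \<le> f lm t" "m \<le> f lm s" using ge lts by auto
    have "\<bar>1 / f lm t - 1 / f lm s\<bar> = \<bar>f lm t - f lm s\<bar> / (f lm t * f lm s)"
      using m \<open>0 < m\<close> by (simp add: field_simps abs_div abs_minus_commute)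
    also have "\<dots> \<le> (L * lm * \<bar>t - s\<bar>) / (m * m)"
      using f[OF lts] m \<open>0 < m\<close> by (intro frac_le mult_mono) auto
    finally show "\<bar>1 / f lm t - 1 / f lm s\<bar> \<le> L / m\<^sup>2 * lm * \<bar>t - s\<bar>"
      by (simp add: power2_eq_square)
  next
    show "\<bar>1 / f lm t\<bar> \<le> 1 / m" if "1 \<le> lm" "0 \<le> t" for lm t
      using ge[OF that] \<open>0 < m\<close> by (simp add: frac_le)
  qed (use \<open>0 \<le> L\<close> in auto)
qed

lemma bounded_lipschitz_family_cong:
  assumes "bounded_lipschitz_family v" "\<And>lm t. 1 \<le> lm \<Longrightarrow> 0 \<le> t \<Longrightarrow> u lm t = v lm t"
  shows "bounded_lipschitz_family u"
  using assms unfolding bounded_lipschitz_family_def by (metis order_refl)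

lemma bounded_lipschitz_family_holder:
  assumes "bounded_lipschitz_family u" "0 \<le> \<alpha>" "\<alpha> \<le> 1"
  obtains K where "0 \<le> K"
    "\<And>lm t s. 1 \<le> lm \<Longrightarrow> 0 \<le> t \<Longrightarrow> 0 \<le> s \<Longrightarrow>
      \<bar>u lm t - u lm s\<bar> \<le> K * lm powr \<alpha> * \<bar>t - s\<bar> powr \<alpha>"
proof -
  obtain B L where B: "0 \<le> B" "0 \<le> L" and u: "\<And>lm t. 1 \<le> lm \<Longrightarrow> 0 \<le> t \<Longrightarrow> \<bar>u lm t\<bar> \<le> B"
    "\<And>lm t s. 1 \<le> lm \<Longrightarrow> 0 \<le> t \<Longrightarrow> 0 \<le> s \<Longrightarrow> \<bar>u lm t - u lm s\<bar> \<le> L * lm * \<bar>t - s\<bar>"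
    using assms(1) by (rule bounded_lipschitz_familyE) blast
  have "\<bar>u lm t - u lm s\<bar> \<le> ((2 * B) powr (1 - \<alpha>) * L powr \<alpha>) * lm powr \<alpha> * \<bar>t - s\<bar> powr \<alpha>"
    if lts: "1 \<le> lm" "0 \<le> t" "0 \<le> s" for lm t s
  proof -
    have "\<bar>u lm t - u lm s\<bar> \<le> 2 * B" using u(1)[OF lts(1,2)] u(1)[OF lts(1,3)] by linarith
    then have "\<bar>u lm t - u lm s\<bar> \<le> (2 * B) powr (1 - \<alpha>) * (L * lm * \<bar>t - s\<bar>) powr \<alpha>"
      using u(2)[OF lts] assms(2,3) by (intro le_powr_interpolation) auto
    then show ?thesis using B lts by (simp add: powr_mult mult_ac)
  qed
  then show ?thesis using that by (meson powr_ge_zero zero_le_mult_iff)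
qed

lemma quadratic_form_lower_bound:
  fixes h x y lm c :: real
  assumes h: "h\<^sup>2 \<le> lm\<^sup>2 / 2" and xy: "x\<^sup>2 + y\<^sup>2 = 1" and c: "0 \<le> c"
  shows "lm\<^sup>2 * min c 1 / 2 \<le> (h * x + lm * sqrt c * y)\<^sup>2 + lm\<^sup>2 * x\<^sup>2"
proof -
  have square: "u\<^sup>2 - 2 * v\<^sup>2 \<le> 2 * (v + u)\<^sup>2" for u v :: real
    using zero_le_power2[of "u + 2 * v"] by (simp add: power2_eq_square algebra_simps)
  have "2 * (h * x)\<^sup>2 \<le> lm\<^sup>2 * x\<^sup>2"
    using mult_right_mono[OF h zero_le_power2[of x]] by (simp add: power_mult_distrib)
  moreover have "(lm * sqrt c * y)\<^sup>2 = lm\<^sup>2 * (c * y\<^sup>2)"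
    using c by (simp add: power_mult_distrib)
  moreover have "lm\<^sup>2 * min c 1 \<le> lm\<^sup>2 * (c * y\<^sup>2) + lm\<^sup>2 * x\<^sup>2"
  proof -
    have "min c 1 = min c 1 * y\<^sup>2 + min c 1 * x\<^sup>2"
      using xy by (simp flip: distrib_left add: add.commute)
    also have "\<dots> \<le> c * y\<^sup>2 + x\<^sup>2"
      using c by (intro add_mono mult_right_mono mult_left_le_one_le) auto
    finally have "min c 1 \<le> c * y\<^sup>2 + x\<^sup>2" .
    then show ?thesis by (simp add: mult_left_mono flip: distrib_left)
  qed
  ultimately show ?thesis using square[of "lm * sqrt c * y" "h * x"] by linarith
qed

lemma Limsup_le_ereal_if_eventually_le:
  fixes f :: "'a \<Rightarrow> ereal"
  assumes "\<And>e. 0 < e \<Longrightarrow> \<forall>\<^sub>F x in F. f x \<le> ereal (X + e)"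
  shows "Limsup F f \<le> ereal X"
proof (rule ereal_le_epsilon2)
  fix e :: real assume "0 < e"
  then have "Limsup F f \<le> ereal (X + e)" by (intro Limsup_bounded assms)
  then show "Limsup F f \<le> ereal X + ereal e" by simp
qed

lemma Hold_le_ereal_imp_holder:
  assumes "Hold \<alpha> c \<le> ereal H" "0 \<le> t" "0 \<le> s"
  shows "\<bar>c t - c s\<bar> \<le> H * \<bar>t - s\<bar> powr \<alpha>"
proof (cases "t = s")
  case False
  have "ereal (\<bar>c t - c s\<bar> / \<bar>t - s\<bar> powr \<alpha>) \<le> Hold \<alpha> c"
    unfolding Hold_def by (rule SUP_upper2[of "(t, s)"]) (use assms False in auto)
  then have "\<bar>c t - c s\<bar> / \<bar>t - s\<bar> powr \<alpha> \<le> H" using assms(1) by (meson ereal_less_eq(3) order_trans)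
  then show ?thesis using False by (simp add: divide_le_eq)
qed simp

locale smooth_coefficient =
  fixes \<mu>1 \<mu>2 M :: real and c0 c1 c2 c3 :: "real \<Rightarrow> real"
  assumes mu1_pos: "0 < \<mu>1" and mu1_less_mu2: "\<mu>1 < \<mu>2"
    and c0_deriv: "\<And>t. 0 \<le> t \<Longrightarrow> (c0 has_real_derivative c1 t) (at t within {0..})"
    and c1_deriv: "\<And>t. 0 \<le> t \<Longrightarrow> (c1 has_real_derivative c2 t) (at t within {0..})"
    and c2_deriv: "\<And>t. 0 \<le> t \<Longrightarrow> (c2 has_real_derivative c3 t) (at t within {0..})"
    and c0_bounds: "\<And>t. 0 \<le> t \<Longrightarrow> \<mu>1 \<le> c0 t \<and> c0 t \<le> \<mu>2"
    and derivs_bounded: "\<And>t. 0 \<le> t \<Longrightarrow> \<bar>c1 t\<bar> + \<bar>c2 t\<bar> + \<bar>c3 t\<bar> \<le> M"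
begin

lemma mu2_pos: "0 < \<mu>2"
  using mu1_pos mu1_less_mu2 by linarith

lemma c0_pos: "0 \<le> t \<Longrightarrow> 0 < c0 t"
  using c0_bounds[of t] mu1_pos by linarith

lemma abs_c1_le: "0 \<le> t \<Longrightarrow> \<bar>c1 t\<bar> \<le> M"
  and abs_c2_le: "0 \<le> t \<Longrightarrow> \<bar>c2 t\<bar> \<le> M"
  and abs_c3_le: "0 \<le> t \<Longrightarrow> \<bar>c3 t\<bar> \<le> M"
  using derivs_bounded[of t] by auto

lemma M_nonneg: "0 \<le> M"
  using abs_c1_le[of 0] by linarith

lemma sqrt_c0_bounds: "0 \<le> t \<Longrightarrow> sqrt \<mu>1 \<le> sqrt (c0 t) \<and> sqrt (c0 t) \<le> sqrt \<mu>2"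
  using c0_bounds[of t] by simp

lemma abs_divide_c0_le: "0 \<le> t \<Longrightarrow> \<bar>x\<bar> \<le> M \<Longrightarrow> \<bar>x / c0 t\<bar> \<le> M / \<mu>1"
  using c0_bounds[of t] c0_pos[of t] mu1_pos M_nonneg by (simp add: abs_div) (intro frac_le, auto)

lemma sqrt_c0_mult_self: "0 \<le> t \<Longrightarrow> sqrt (c0 t) * sqrt (c0 t) = c0 t"
  using c0_pos[of t] by simp

lemma c0_powr_three_halves: "0 \<le> t \<Longrightarrow> c0 t powr (3/2) = c0 t * sqrt (c0 t)"
  using c0_pos[of t] powr_add[of "c0 t" 1 "1/2"] by (simp add: powr_half_sqrt)

lemma continuous_on_c0: "continuous_on {0..} c0"
  by (rule DERIV_continuous_on) (use c0_deriv in auto)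

lemma sqrt_c0_has_real_derivative:
  "0 \<le> t \<Longrightarrow> ((\<lambda>t. sqrt (c0 t)) has_real_derivative c1 t / (2 * sqrt (c0 t))) (at t within {0..})"
  using c0_pos[of t] c0_deriv[of t] by (auto intro!: derivative_eq_intros simp: field_simps)

lemma phase_has_real_derivative:
  "0 \<le> t \<Longrightarrow> (phase c0 lm has_real_derivative lm * sqrt (c0 t)) (at t within {0..})"
  unfolding phase_def
  by (auto intro!: derivative_eq_intros integral_has_real_derivative_atLeast continuous_intros
      continuous_on_c0)

lemma continuous_on_phase: "continuous_on {0..} (phase c0 lm)"
  by (rule DERIV_continuous_on) (use phase_has_real_derivative in auto)

lemma phase_0 [simp]: "phase c0 lm 0 = 0"
  by (simp add: phase_def)

text \<open>\<open>\<gamma>(\<epsilon>,\<lambda>,t)\<close> with its last term \<open>\<delta>\<^sup>2/\<lambda>\<^bsup>2-4\<sigma>\<^esup>\<close> written as \<open>D\<^sup>2/\<lambda>\<^sup>2\<close>, where \<open>D = \<delta>\<lambda>\<^bsup>2\<sigma>\<^esup>\<close> is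
  the damping coefficient of the equation \<open>w'' + 2Dw' + \<lambda>\<^sup>2\<gamma>w = 0\<close>.\<close>

definition gammaD :: "real \<Rightarrow> real \<Rightarrow> real \<Rightarrow> real \<Rightarrow> real" where
  "gammaD lm ep D t = (let a = phase c0 lm t in
     c0 t - ep * sin (2 * a) - ep\<^sup>2 / 4 * (sin a ^ 4 / c0 t)
     - 5 / (16 * lm\<^sup>2) * (c1 t / c0 t)\<^sup>2 + ep / (2 * lm) * (c1 t / c0 t powr (3/2)) * (sin a)\<^sup>2
     + 1 / (4 * lm\<^sup>2) * (c2 t / c0 t) + D\<^sup>2 / lm\<^sup>2)"

lemma gamma_eq_gammaD:
  assumes "0 < lm"
  shows "gamma c0 c1 c2 \<delta> \<sigma> ep lm = gammaD lm ep (\<delta> * lm powr (2 * \<sigma>))"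
proof -
  have "lm powr (2 - 4 * \<sigma>) = lm\<^sup>2 / (lm powr (2 * \<sigma>))\<^sup>2"
    using assms by (simp add: powr_diff power2_eq_square powr_add[symmetric])
  then have "\<delta>\<^sup>2 / lm powr (2 - 4 * \<sigma>) = (\<delta> * lm powr (2 * \<sigma>))\<^sup>2 / lm\<^sup>2"
    by (simp add: power_mult_distrib)
  then show ?thesis unfolding gamma_def gammaD_def by (simp add: fun_eq_iff)
qed

definition theta :: "real \<Rightarrow> real \<Rightarrow> real \<Rightarrow> real" where
  "theta lm ep t = integral {0..t} (\<lambda>s. ep * lm / 2 * sin (phase c0 lm s) ^ 2 / sqrt (c0 s))"

definition log_amplitude_rate :: "real \<Rightarrow> real \<Rightarrow> real \<Rightarrow> real \<Rightarrow> real" where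
  "log_amplitude_rate lm ep D t =
     ep * lm / 2 * sin (phase c0 lm t) ^ 2 / sqrt (c0 t) - D - c1 t / (4 * c0 t)"

text \<open>The normalisation of the amplitude makes the explicit solution satisfy \<open>w(0) = 0\<close>, \<open>w'(0) = 1\<close>.\<close>

definition amplitude :: "real \<Rightarrow> real \<Rightarrow> real \<Rightarrow> real \<Rightarrow> real" where
  "amplitude lm ep D t =
     exp (theta lm ep t - D * t - ln (c0 t) / 4 + ln (c0 0) / 4) / (lm * sqrt (c0 0))"

definition explicit_sol :: "real \<Rightarrow> real \<Rightarrow> real \<Rightarrow> real \<Rightarrow> real" where
  "explicit_sol lm ep D t = amplitude lm ep D t * sin (phase c0 lm t)"

definition explicit_sol_dt :: "real \<Rightarrow> real \<Rightarrow> real \<Rightarrow> real \<Rightarrow> real" where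
  "explicit_sol_dt lm ep D t = amplitude lm ep D t *
     (log_amplitude_rate lm ep D t * sin (phase c0 lm t) + lm * sqrt (c0 t) * cos (phase c0 lm t))"

lemma theta_has_real_derivative:
  "0 \<le> t \<Longrightarrow> (theta lm ep has_real_derivative ep * lm / 2 * sin (phase c0 lm t) ^ 2 / sqrt (c0 t))
     (at t within {0..})"
  unfolding theta_def using c0_pos
  by (force intro!: integral_has_real_derivative_atLeast continuous_intros continuous_on_phase
      continuous_on_c0)

lemma theta_0 [simp]: "theta lm ep 0 = 0"
  by (simp add: theta_def)

lemma amplitude_has_real_derivative:
  assumes "0 \<le> t"
  shows "(amplitude lm ep D has_real_derivative amplitude lm ep D t * log_amplitude_rate lm ep D t)
     (at t within {0..})"
proof -
  have "((\<lambda>t. theta lm ep t - D * t - ln (c0 t) / 4 + ln (c0 0) / 4) has_real_derivative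
      log_amplitude_rate lm ep D t) (at t within {0..})"
    unfolding log_amplitude_rate_def
    using c0_pos[OF assms] theta_has_real_derivative[OF assms] c0_deriv[OF assms]
    by (auto intro!: derivative_eq_intros simp: field_simps)
  from DERIV_cdivide[OF DERIV_chain2[OF DERIV_exp this], of "lm * sqrt (c0 0)"]
  show ?thesis unfolding amplitude_def by (simp add: mult.commute)
qed

lemma log_amplitude_rate_has_real_derivative:
  assumes "0 \<le> t"
  shows "(log_amplitude_rate lm ep D has_real_derivative
    ep * lm / 2 * (2 * sin (phase c0 lm t) * cos (phase c0 lm t) * lm
      - sin (phase c0 lm t) ^ 2 * c1 t / (2 * c0 t * sqrt (c0 t)))
    - (c2 t * c0 t - c1 t * c1 t) / (4 * (c0 t)\<^sup>2)) (at t within {0..})"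
proof -
  let ?S = "sin (phase c0 lm t)" and ?C = "cos (phase c0 lm t)" and ?r = "sqrt (c0 t)"
  have r: "0 < ?r" "c0 t = ?r * ?r"
    using c0_pos[OF assms] sqrt_c0_mult_self[OF assms] by auto
  have "(log_amplitude_rate lm ep D has_real_derivative
    ep * lm / 2 * (2 * ?S * (?C * (lm * ?r)) * ?r - ?S ^ 2 * (c1 t / (2 * ?r))) / ?r\<^sup>2
    - (c2 t * (4 * c0 t) - c1 t * (4 * c1 t)) / (4 * c0 t)\<^sup>2) (at t within {0..})"
    unfolding log_amplitude_rate_def
    using phase_has_real_derivative[OF assms] sqrt_c0_has_real_derivative[OF assms] c0_deriv[OF assms]
      c1_deriv[OF assms] r(1) c0_pos[OF assms]
    by (auto intro!: derivative_eq_intros simp: power2_eq_square) (simp add: field_simps)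
  moreover have "ep * lm / 2 * (2 * ?S * (?C * (lm * ?r)) * ?r - ?S ^ 2 * (c1 t / (2 * ?r))) / ?r\<^sup>2
    - (c2 t * (4 * c0 t) - c1 t * (4 * c1 t)) / (4 * c0 t)\<^sup>2
    = ep * lm / 2 * (2 * ?S * ?C * lm - ?S ^ 2 * c1 t / (2 * c0 t * ?r))
    - (c2 t * c0 t - c1 t * c1 t) / (4 * (c0 t)\<^sup>2)"
    using r by (simp add: field_simps power2_eq_square)
  ultimately show ?thesis by simp
qed

lemma explicit_sol_has_real_derivative:
  assumes "0 \<le> t"
  shows "(explicit_sol lm ep D has_real_derivative explicit_sol_dt lm ep D t) (at t within {0..})"
  unfolding explicit_sol_def explicit_sol_dt_def
  using amplitude_has_real_derivative[OF assms] phase_has_real_derivative[OF assms]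
  by (auto intro!: derivative_eq_intros simp: algebra_simps)

lemma explicit_sol_dt_has_real_derivative:
  assumes "0 \<le> t" "0 < lm"
  shows "(explicit_sol_dt lm ep D has_real_derivative
    - 2 * D * explicit_sol_dt lm ep D t - lm\<^sup>2 * gammaD lm ep D t * explicit_sol lm ep D t)
    (at t within {0..})"
proof -
  define S C r A h where "S = sin (phase c0 lm t)" and "C = cos (phase c0 lm t)"
    and "r = sqrt (c0 t)" and "A = amplitude lm ep D t" and "h = log_amplitude_rate lm ep D t"
  have r: "0 < r" "c0 t = r * r"
    unfolding r_def using c0_pos[OF assms(1)] sqrt_c0_mult_self[OF assms(1)] by auto
  define h' where "h' = ep * lm / 2 * (2 * S * C * lm - S ^ 2 * c1 t / (2 * c0 t * r))
    - (c2 t * c0 t - c1 t * c1 t) / (4 * (c0 t)\<^sup>2)"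
  have "(explicit_sol_dt lm ep D has_real_derivative
    A * h * (h * S + lm * r * C)
    + A * (h' * S + h * (C * (lm * r)) + lm * (c1 t / (2 * r)) * C - lm * r * (S * (lm * r))))
    (at t within {0..})"
    unfolding explicit_sol_dt_def S_def C_def r_def A_def h_def h'_def
    apply (rule amplitude_has_real_derivative[OF assms(1)] log_amplitude_rate_has_real_derivative[OF assms(1)]
        phase_has_real_derivative[OF assms(1)] sqrt_c0_has_real_derivative[OF assms(1)]
        derivative_eq_intros refl)+
    by (simp add: algebra_simps)
  moreover have "A * h * (h * S + lm * r * C)
    + A * (h' * S + h * (C * (lm * r)) + lm * (c1 t / (2 * r)) * C - lm * r * (S * (lm * r)))
    = - 2 * D * explicit_sol_dt lm ep D t - lm\<^sup>2 * gammaD lm ep D t * explicit_sol lm ep D t"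
  proof -
    have h_eq: "h = ep * lm / 2 * S ^ 2 / r - D - c1 t / (4 * c0 t)"
      unfolding h_def log_amplitude_rate_def S_def r_def ..
    have gammaD_eq: "gammaD lm ep D t = c0 t - ep * (2 * S * C) - ep\<^sup>2 / 4 * (S ^ 4 / c0 t)
      - 5 / (16 * lm\<^sup>2) * (c1 t / c0 t)\<^sup>2 + ep / (2 * lm) * (c1 t / (c0 t * r)) * S\<^sup>2
      + 1 / (4 * lm\<^sup>2) * (c2 t / c0 t) + D\<^sup>2 / lm\<^sup>2"
      unfolding gammaD_def Let_def S_def C_def r_def sin_double c0_powr_three_halves[OF assms(1)] ..
    show ?thesis
      unfolding explicit_sol_dt_def explicit_sol_def S_def[symmetric] C_def[symmetric]
        r_def[symmetric] A_def[symmetric] h_def[symmetric] gammaD_eq h_eq h'_def r(2)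
      using r(1) assms(2) by (simp add: field_simps) algebra
  qed
  ultimately show ?thesis by simp
qed

lemma explicit_sol_0: "explicit_sol lm ep D 0 = 0"
  by (simp add: explicit_sol_def)

lemma explicit_sol_dt_0: "0 < lm \<Longrightarrow> explicit_sol_dt lm ep D 0 = 1"
  using c0_pos[of 0] by (simp add: explicit_sol_dt_def amplitude_def)

definition gammaD_deviation_bound :: "real \<Rightarrow> real \<Rightarrow> real \<Rightarrow> real" where
  "gammaD_deviation_bound lm ep D = ep + ep\<^sup>2 / (4 * \<mu>1) + 5 * M\<^sup>2 / (16 * lm\<^sup>2 * \<mu>1\<^sup>2)
     + ep * M / (2 * lm * (\<mu>1 * sqrt \<mu>1)) + M / (4 * lm\<^sup>2 * \<mu>1) + D\<^sup>2 / lm\<^sup>2"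

lemma abs_gammaD_minus_c0_le:
  assumes lm: "0 < lm" and ep: "0 \<le> ep" and t: "0 \<le> t"
  shows "\<bar>gammaD lm ep D t - c0 t\<bar> \<le> gammaD_deviation_bound lm ep D"
proof -
  define x where "x = sin (phase c0 lm t)"
  have x2: "x\<^sup>2 \<le> 1" by (simp add: x_def abs_square_le_1)
  then have x4: "x ^ 4 \<le> 1"
    using power_le_one[OF zero_le_power2 x2, of 2] by (simp flip: power_mult)
  have c0t: "\<mu>1 \<le> c0 t" "0 < c0 t" using c0_bounds[OF t] c0_pos[OF t] by auto
  have b1: "\<bar>ep * sin (2 * phase c0 lm t)\<bar> \<le> ep" using ep by (simp add: abs_mult mult_left_le)
  have b2: "\<bar>ep\<^sup>2 / 4 * (x ^ 4 / c0 t)\<bar> \<le> ep\<^sup>2 / (4 * \<mu>1)"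
  proof -
    have "x ^ 4 / c0 t \<le> 1 / \<mu>1" using x4 c0t mu1_pos by (intro frac_le) auto
    then have "ep\<^sup>2 / 4 * (x ^ 4 / c0 t) \<le> ep\<^sup>2 / 4 * (1 / \<mu>1)" by (rule mult_left_mono) auto
    moreover have "0 \<le> ep\<^sup>2 / 4 * (x ^ 4 / c0 t)" using c0t by (simp add: zero_le_even_power)
    ultimately show ?thesis by simp
  qed
  have b3: "\<bar>5 / (16 * lm\<^sup>2) * (c1 t / c0 t)\<^sup>2\<bar> \<le> 5 * M\<^sup>2 / (16 * lm\<^sup>2 * \<mu>1\<^sup>2)"
  proof -
    have "\<bar>c1 t / c0 t\<bar> \<le> M / \<mu>1" by (rule abs_divide_c0_le[OF t abs_c1_le[OF t]])
    then have "(c1 t / c0 t)\<^sup>2 \<le> (M / \<mu>1)\<^sup>2" by (metis abs_ge_zero power2_abs power_mono)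
    then have "5 / (16 * lm\<^sup>2) * (c1 t / c0 t)\<^sup>2 \<le> 5 / (16 * lm\<^sup>2) * (M / \<mu>1)\<^sup>2"
      by (rule mult_left_mono) auto
    then show ?thesis by (simp add: power_divide)
  qed
  have b4: "\<bar>ep / (2 * lm) * (c1 t / c0 t powr (3/2)) * x\<^sup>2\<bar> \<le> ep * M / (2 * lm * (\<mu>1 * sqrt \<mu>1))"
  proof -
    have "\<mu>1 * sqrt \<mu>1 \<le> c0 t * sqrt (c0 t)" using c0t mu1_pos by (intro mult_mono) auto
    then have "\<bar>c1 t / c0 t powr (3/2)\<bar> \<le> M / (\<mu>1 * sqrt \<mu>1)"
      unfolding c0_powr_three_halves[OF t] using abs_c1_le[OF t] c0t mu1_pos M_nonneg
      by (simp add: abs_div abs_mult) (intro frac_le, auto)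
    then have "\<bar>c1 t / c0 t powr (3/2)\<bar> * x\<^sup>2 \<le> M / (\<mu>1 * sqrt \<mu>1)"
      using mult_left_le[OF x2, of "\<bar>c1 t / c0 t powr (3/2)\<bar>"] by simp
    then have "ep / (2 * lm) * (\<bar>c1 t / c0 t powr (3/2)\<bar> * x\<^sup>2) \<le> ep / (2 * lm) * (M / (\<mu>1 * sqrt \<mu>1))"
      by (rule mult_left_mono) (use lm ep in auto)
    then show ?thesis using lm ep by (simp add: abs_mult)
  qed
  have b5: "\<bar>1 / (4 * lm\<^sup>2) * (c2 t / c0 t)\<bar> \<le> M / (4 * lm\<^sup>2 * \<mu>1)"
  proof -
    have "\<bar>c2 t / c0 t\<bar> \<le> M / \<mu>1" by (rule abs_divide_c0_le[OF t abs_c2_le[OF t]])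
    then have "1 / (4 * lm\<^sup>2) * \<bar>c2 t / c0 t\<bar> \<le> 1 / (4 * lm\<^sup>2) * (M / \<mu>1)" by (rule mult_left_mono) auto
    then show ?thesis by (simp add: abs_mult)
  qed
  have "gammaD lm ep D t - c0 t = - (ep * sin (2 * phase c0 lm t)) - ep\<^sup>2 / 4 * (x ^ 4 / c0 t)
    - 5 / (16 * lm\<^sup>2) * (c1 t / c0 t)\<^sup>2 + ep / (2 * lm) * (c1 t / c0 t powr (3/2)) * x\<^sup>2
    + 1 / (4 * lm\<^sup>2) * (c2 t / c0 t) + D\<^sup>2 / lm\<^sup>2"
    unfolding gammaD_def Let_def x_def by simp
  moreover have "\<bar>D\<^sup>2 / lm\<^sup>2\<bar> = D\<^sup>2 / lm\<^sup>2" by simp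
  ultimately show ?thesis unfolding gammaD_deviation_bound_def using b1 b2 b3 b4 b5 by linarith
qed

lemma solution_eq_explicit_sol:
  fixes w w' :: "real \<Rightarrow> real"
  assumes lm: "0 < lm" and ep: "0 \<le> ep" and D: "0 \<le> D"
    and init: "w 0 = 0" "w' 0 = 1"
    and w: "\<And>t. 0 \<le> t \<Longrightarrow> (w has_real_derivative w' t) (at t within {0..})"
    and w': "\<And>t. 0 \<le> t \<Longrightarrow> (w' has_real_derivative (- 2 * D * w' t - lm\<^sup>2 * gammaD lm ep D t * w t))
      (at t within {0..})"
    and t: "0 \<le> t"
  shows "w t = explicit_sol lm ep D t \<and> w' t = explicit_sol_dt lm ep D t"
proof -
  have "(\<lambda>t. w t - explicit_sol lm ep D t) t = 0 \<and> (\<lambda>t. w' t - explicit_sol_dt lm ep D t) t = 0"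
  proof (rule damped_linear_ode_zero_data[where u="\<lambda>t. w t - explicit_sol lm ep D t"
        and u'="\<lambda>t. w' t - explicit_sol_dt lm ep D t" and c="2 * D" and q="\<lambda>t. lm\<^sup>2 * gammaD lm ep D t"
        and Q="lm\<^sup>2 * (\<mu>2 + gammaD_deviation_bound lm ep D)"])
    show "\<bar>lm\<^sup>2 * gammaD lm ep D x\<bar> \<le> lm\<^sup>2 * (\<mu>2 + gammaD_deviation_bound lm ep D)" if "0 \<le> x" for x
    proof -
      have "\<bar>gammaD lm ep D x\<bar> \<le> \<mu>2 + gammaD_deviation_bound lm ep D"
        using abs_gammaD_minus_c0_le[OF lm ep that, of D] c0_bounds[OF that] c0_pos[OF that] by linarith
      then show ?thesis by (simp add: abs_mult mult_left_mono)
    qed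
    show "((\<lambda>t. w t - explicit_sol lm ep D t) has_real_derivative w' x - explicit_sol_dt lm ep D x)
        (at x within {0..})" if "0 \<le> x" for x
      using w[OF that] explicit_sol_has_real_derivative[OF that] by (rule DERIV_diff)
    show "((\<lambda>t. w' t - explicit_sol_dt lm ep D t) has_real_derivative
        - (2 * D) * (w' x - explicit_sol_dt lm ep D x) - lm\<^sup>2 * gammaD lm ep D x * (w x - explicit_sol lm ep D x))
        (at x within {0..})" if "0 \<le> x" for x
      using DERIV_diff[OF w'[OF that] explicit_sol_dt_has_real_derivative[OF that lm]]
      by (simp add: algebra_simps)
  qed (use D init explicit_sol_0 explicit_sol_dt_0[OF lm] t in auto)
  then show ?thesis by simp
qed

text \<open>The derivative of the corrector is \<open>sin\<^sup>2a - 1/4\<close> up to an error \<open>O(M/\<lambda>)\<close>, so it tracks the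
  average of \<open>sin\<^sup>2a\<close> along the phase.\<close>

definition averaging_corrector :: "real \<Rightarrow> real \<Rightarrow> real" where
  "averaging_corrector lm t = t / 4 - sin (phase c0 lm t) * cos (phase c0 lm t) / (2 * lm * sqrt (c0 t))"

lemma averaging_corrector_has_real_derivative:
  assumes "0 < lm" "0 \<le> t"
  shows "(averaging_corrector lm has_real_derivative
    1/4 - ((cos (phase c0 lm t))\<^sup>2 - (sin (phase c0 lm t))\<^sup>2) / 2
      + sin (phase c0 lm t) * cos (phase c0 lm t) * c1 t / (4 * lm * sqrt (c0 t) ^ 3)) (at t within {0..})"
proof -
  define r where "r = (\<lambda>t. sqrt (c0 t))"
  have corrector: "averaging_corrector lm = (\<lambda>x. x / 4 - sin (phase c0 lm x) * cos (phase c0 lm x) / (2 * lm * r x))"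
    by (simp add: fun_eq_iff averaging_corrector_def r_def)
  have "sqrt (c0 t) = r t" "0 < r t" unfolding r_def using c0_pos[OF assms(2)] by auto
  moreover have "(r has_real_derivative c1 t / (2 * r t)) (at t within {0..})"
    unfolding r_def by (rule sqrt_c0_has_real_derivative[OF assms(2)])
  ultimately show ?thesis
    unfolding corrector using phase_has_real_derivative[OF assms(2)] assms(1)
    by (auto intro!: derivative_eq_intros) (simp add: field_simps power2_eq_square power3_eq_cube)
qed

lemma averaging_corrector_deriv_le:
  assumes lm: "0 < lm" and M: "M \<le> lm * (\<mu>1 * sqrt \<mu>1)" and t: "0 \<le> t"
  shows "1/4 - ((cos (phase c0 lm t))\<^sup>2 - (sin (phase c0 lm t))\<^sup>2) / 2
      + sin (phase c0 lm t) * cos (phase c0 lm t) * c1 t / (4 * lm * sqrt (c0 t) ^ 3)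
    \<le> (sin (phase c0 lm t))\<^sup>2"
proof -
  let ?S = "sin (phase c0 lm t)" and ?C = "cos (phase c0 lm t)"
  have "\<mu>1 * sqrt \<mu>1 \<le> sqrt (c0 t) ^ 3"
    using sqrt_c0_bounds[OF t] c0_bounds[OF t] mu1_pos sqrt_c0_mult_self[OF t]
    by (simp add: power3_eq_cube mult_mono)
  then have "M \<le> lm * sqrt (c0 t) ^ 3"
    using M mult_left_mono[of _ _ lm] lm by (meson less_imp_le order_trans)
  moreover have "\<bar>?S * ?C * c1 t\<bar> \<le> M"
    using mult_mono[OF mult_mono[OF abs_sin_le_one abs_cos_le_one] abs_c1_le[OF t]]
    by (simp add: abs_mult)
  ultimately have "?S * ?C * c1 t / (4 * lm * sqrt (c0 t) ^ 3) \<le> 1/4"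
    using lm c0_pos[OF t] by (simp add: divide_le_eq abs_le_iff)
  moreover have "1/4 - (?C\<^sup>2 - ?S\<^sup>2) / 2 = ?S\<^sup>2 - 1/4"
    unfolding cos_squared_eq by (simp add: field_simps)
  ultimately show ?thesis by linarith
qed

lemma averaging_corrector_ge:
  assumes "0 < lm" "0 \<le> t"
  shows "t / 4 - 1 / (2 * lm * sqrt \<mu>1) \<le> averaging_corrector lm t"
proof -
  have "\<bar>sin (phase c0 lm t) * cos (phase c0 lm t)\<bar> \<le> 1"
    using mult_mono[OF abs_sin_le_one abs_cos_le_one] by (simp add: abs_mult)
  then have "sin (phase c0 lm t) * cos (phase c0 lm t) / (2 * lm * sqrt (c0 t)) \<le> 1 / (2 * lm * sqrt \<mu>1)"
    using sqrt_c0_bounds[OF assms(2)] assms mu1_pos by (intro frac_le) (auto simp: abs_le_iff)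
  then show ?thesis unfolding averaging_corrector_def by simp
qed

lemma theta_lower_bound:
  assumes lm: "0 < lm" and ep: "0 < ep" and M: "M \<le> lm * (\<mu>1 * sqrt \<mu>1)" and t: "0 \<le> t"
  shows "ep * lm * t / (4 * sqrt \<mu>2) - ep / (2 * sqrt \<mu>1 * sqrt \<mu>2) \<le> 2 * theta lm ep t"
proof -
  define \<kappa> where "\<kappa> = ep * lm / (2 * sqrt \<mu>2)"
  have \<kappa>: "0 < \<kappa>" unfolding \<kappa>_def using ep lm mu2_pos by auto
  have "theta lm ep 0 - \<kappa> * averaging_corrector lm 0 \<le> theta lm ep t - \<kappa> * averaging_corrector lm t"
  proof (rule deriv_nonneg_imp_increasing_atLeast[OF _ _ order_refl t])
    let ?S = "\<lambda>x. sin (phase c0 lm x)" and ?C = "\<lambda>x. cos (phase c0 lm x)"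
    let ?\<psi>' = "\<lambda>x. 1/4 - ((?C x)\<^sup>2 - (?S x)\<^sup>2) / 2 + ?S x * ?C x * c1 x / (4 * lm * sqrt (c0 x) ^ 3)"
    show "((\<lambda>x. theta lm ep x - \<kappa> * averaging_corrector lm x) has_real_derivative
        ep * lm / 2 * ?S x ^ 2 / sqrt (c0 x) - \<kappa> * ?\<psi>' x) (at x within {0..})" if "0 \<le> x" for x
      using theta_has_real_derivative[OF that] averaging_corrector_has_real_derivative[OF lm that]
      by (auto intro!: derivative_eq_intros)
    show "0 \<le> ep * lm / 2 * ?S x ^ 2 / sqrt (c0 x) - \<kappa> * ?\<psi>' x" if "0 \<le> x" for x
    proof -
      have "\<kappa> * ?\<psi>' x \<le> \<kappa> * (?S x)\<^sup>2" using averaging_corrector_deriv_le[OF lm M that] \<kappa> by simp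
      also have "\<dots> \<le> ep * lm / 2 * ?S x ^ 2 / sqrt (c0 x)"
      proof -
        have "ep * lm / 2 / sqrt \<mu>2 \<le> ep * lm / 2 / sqrt (c0 x)"
          using sqrt_c0_bounds[OF that] c0_pos[OF that] ep lm mu2_pos by (intro divide_left_mono) auto
        from mult_right_mono[OF this zero_le_power2[of "?S x"]]
        show ?thesis unfolding \<kappa>_def by simp
      qed
      finally show ?thesis by simp
    qed
  qed
  moreover have "\<kappa> * (t / 4 - 1 / (2 * lm * sqrt \<mu>1)) \<le> \<kappa> * averaging_corrector lm t"
    using averaging_corrector_ge[OF lm t] \<kappa> by simp
  moreover have "averaging_corrector lm 0 = 0" by (simp add: averaging_corrector_def)
  moreover have "2 * (\<kappa> * (t / 4 - 1 / (2 * lm * sqrt \<mu>1)))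
      = ep * lm * t / (4 * sqrt \<mu>2) - ep / (2 * sqrt \<mu>1 * sqrt \<mu>2)"
    unfolding \<kappa>_def using lm mu1_pos mu2_pos by (simp add: field_simps)
  ultimately show ?thesis by simp
qed

lemma lm_amplitude_sq:
  assumes "0 < lm" "0 \<le> t"
  shows "(lm * amplitude lm ep D t)\<^sup>2 = exp (2 * (theta lm ep t - D * t)) / sqrt (c0 0 * c0 t)"
proof -
  have pos: "0 < c0 0" "0 < c0 t" using c0_pos assms(2) by auto
  let ?E = "theta lm ep t - D * t - ln (c0 t) / 4 + ln (c0 0) / 4"
  have "(lm * amplitude lm ep D t)\<^sup>2 = exp (2 * ?E) / c0 0"
    using assms(1) pos unfolding amplitude_def
    by (simp add: power_divide power_mult_distrib flip: exp_of_nat_mult)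
  also have "\<dots> = exp (2 * ?E - ln (c0 0))"
    by (subst exp_diff) (use pos in simp)
  also have "2 * ?E - ln (c0 0) = 2 * (theta lm ep t - D * t) - (ln (c0 0) + ln (c0 t)) / 2"
    by (simp add: algebra_simps)
  also have "exp \<dots> = exp (2 * (theta lm ep t - D * t)) / exp ((ln (c0 0) + ln (c0 t)) / 2)"
    by (rule exp_diff)
  also have "exp ((ln (c0 0) + ln (c0 t)) / 2) = sqrt (c0 0 * c0 t)"
    using pos by (simp add: powr_half_sqrt[symmetric] powr_def ln_mult)
  finally show ?thesis .
qed

lemma abs_log_amplitude_rate_le:
  assumes ep: "0 \<le> ep" and lm: "0 < lm" and D: "0 \<le> D" and t: "0 \<le> t"
  shows "\<bar>log_amplitude_rate lm ep D t\<bar> \<le> ep * lm / (2 * sqrt \<mu>1) + D + M / (4 * \<mu>1)"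
proof -
  have "ep * lm / 2 * sin (phase c0 lm t) ^ 2 / sqrt (c0 t) \<le> ep * lm / 2 / sqrt \<mu>1"
    using sqrt_c0_bounds[OF t] c0_pos[OF t] mu1_pos ep lm
    by (intro frac_le mult_left_le) (auto simp: abs_square_le_1)
  moreover have "\<bar>c1 t / (4 * c0 t)\<bar> \<le> M / (4 * \<mu>1)"
    using abs_divide_c0_le[OF t abs_c1_le[OF t]] by simp
  moreover have "0 \<le> ep * lm / 2 * sin (phase c0 lm t) ^ 2 / sqrt (c0 t)" using ep lm c0_pos[OF t] by simp
  ultimately show ?thesis unfolding log_amplitude_rate_def using D by linarith
qed

lemma explicit_sol_energy_ge:
  assumes lm: "0 < lm" and ep: "0 \<le> ep" and D: "0 \<le> D"
    and small: "(ep * lm / (2 * sqrt \<mu>1) + D + M / (4 * \<mu>1))\<^sup>2 \<le> lm\<^sup>2 / 2" and t: "0 \<le> t"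
  shows "min \<mu>1 1 / (2 * \<mu>2) * exp (2 * (theta lm ep t - D * t))
    \<le> (explicit_sol_dt lm ep D t)\<^sup>2 + lm\<^sup>2 * (explicit_sol lm ep D t)\<^sup>2"
proof -
  let ?h = "log_amplitude_rate lm ep D t" and ?S = "sin (phase c0 lm t)" and ?C = "cos (phase c0 lm t)"
  let ?E = "exp (2 * (theta lm ep t - D * t))"
  have "\<bar>?h\<bar> \<le> ep * lm / (2 * sqrt \<mu>1) + D + M / (4 * \<mu>1)"
    by (rule abs_log_amplitude_rate_le[OF ep lm D t])
  then have "?h\<^sup>2 \<le> lm\<^sup>2 / 2"
    using small power_mono[of "\<bar>?h\<bar>"] by (metis abs_ge_zero power2_abs order_trans)
  from quadratic_form_lower_bound[OF this sin_cos_squared_add[of "phase c0 lm t"] less_imp_le[OF c0_pos[OF t]]]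
  have "(amplitude lm ep D t)\<^sup>2 * (lm\<^sup>2 * min (c0 t) 1 / 2)
      \<le> (amplitude lm ep D t)\<^sup>2 * ((?h * ?S + lm * sqrt (c0 t) * ?C)\<^sup>2 + lm\<^sup>2 * ?S\<^sup>2)"
    by (rule mult_left_mono) simp
  also have "\<dots> = (explicit_sol_dt lm ep D t)\<^sup>2 + lm\<^sup>2 * (explicit_sol lm ep D t)\<^sup>2"
    by (simp add: explicit_sol_def explicit_sol_dt_def power2_eq_square algebra_simps)
  finally have "(lm * amplitude lm ep D t)\<^sup>2 * (min (c0 t) 1 / 2)
      \<le> (explicit_sol_dt lm ep D t)\<^sup>2 + lm\<^sup>2 * (explicit_sol lm ep D t)\<^sup>2"
    by (simp add: power_mult_distrib mult_ac)
  then have energy: "?E * min (c0 t) 1 / (2 * sqrt (c0 0 * c0 t))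
      \<le> (explicit_sol_dt lm ep D t)\<^sup>2 + lm\<^sup>2 * (explicit_sol lm ep D t)\<^sup>2"
    unfolding lm_amplitude_sq[OF lm t] by simp
  have "min \<mu>1 1 / (2 * \<mu>2) * ?E \<le> ?E * min (c0 t) 1 / (2 * sqrt (c0 0 * c0 t))"
  proof -
    have "sqrt (c0 0 * c0 t) \<le> sqrt (\<mu>2 * \<mu>2)"
      using c0_bounds[of 0] c0_bounds[OF t] c0_pos[OF t] by (intro real_sqrt_le_mono mult_mono) auto
    then have "2 * sqrt (c0 0 * c0 t) \<le> 2 * \<mu>2" using mu2_pos by simp
    moreover have "0 < 2 * sqrt (c0 0 * c0 t)" using c0_pos[of 0] c0_pos[OF t] by simp
    moreover have "?E * min \<mu>1 1 \<le> ?E * min (c0 t) 1" using c0_bounds[OF t] by (simp add: min_def)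
    ultimately have "?E * min \<mu>1 1 / (2 * \<mu>2) \<le> ?E * min (c0 t) 1 / (2 * sqrt (c0 0 * c0 t))"
      using mu1_pos by (intro frac_le) auto
    then show ?thesis by (simp add: mult.commute)
  qed
  with energy show ?thesis by linarith
qed

lemma energy_growth:
  fixes w w' :: "real \<Rightarrow> real"
  assumes lm: "0 < lm" and ep: "0 < ep" and D: "0 \<le> D"
    and small: "(ep * lm / (2 * sqrt \<mu>1) + D + M / (4 * \<mu>1))\<^sup>2 \<le> lm\<^sup>2 / 2"
    and M: "M \<le> lm * (\<mu>1 * sqrt \<mu>1)"
    and ep_small: "ep / (2 * sqrt \<mu>1 * sqrt \<mu>2) \<le> ln (\<mu>2 / \<mu>1)"
    and init: "w 0 = 0" "w' 0 = 1"
    and w: "\<And>t. 0 \<le> t \<Longrightarrow> (w has_real_derivative w' t) (at t within {0..})"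
    and w': "\<And>t. 0 \<le> t \<Longrightarrow> (w' has_real_derivative (- 2 * D * w' t - lm\<^sup>2 * gammaD lm ep D t * w t))
      (at t within {0..})"
    and t: "0 \<le> t"
  shows "\<mu>1 * min 1 \<mu>1 / (2 * \<mu>2\<^sup>2) * exp (1 / (4 * sqrt \<mu>2) * ep * lm * t - 2 * D * t)
    \<le> (w' t)\<^sup>2 + lm\<^sup>2 * (w t)\<^sup>2"
proof -
  let ?x = "1 / (4 * sqrt \<mu>2) * ep * lm * t - 2 * D * t"
  have "?x - ln (\<mu>2 / \<mu>1) \<le> 2 * (theta lm ep t - D * t)"
    using theta_lower_bound[OF lm ep M t] ep_small by (simp add: algebra_simps)
  have "exp ?x * (\<mu>1 / \<mu>2) = exp (?x - ln (\<mu>2 / \<mu>1))"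
    using mu1_pos mu2_pos by (simp add: exp_diff)
  also have "\<dots> \<le> exp (2 * (theta lm ep t - D * t))"
    using \<open>?x - ln (\<mu>2 / \<mu>1) \<le> 2 * (theta lm ep t - D * t)\<close> by simp
  finally have "exp ?x * (\<mu>1 / \<mu>2) \<le> exp (2 * (theta lm ep t - D * t))" .
  then have "min \<mu>1 1 / (2 * \<mu>2) * (exp ?x * (\<mu>1 / \<mu>2))
      \<le> min \<mu>1 1 / (2 * \<mu>2) * exp (2 * (theta lm ep t - D * t))"
    using mu1_pos mu2_pos by (intro mult_left_mono) auto
  moreover have "\<mu>1 * min 1 \<mu>1 / (2 * \<mu>2\<^sup>2) * exp ?x = min \<mu>1 1 / (2 * \<mu>2) * (exp ?x * (\<mu>1 / \<mu>2))"
    by (simp add: power2_eq_square min.commute mult_ac)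
  ultimately have "\<mu>1 * min 1 \<mu>1 / (2 * \<mu>2\<^sup>2) * exp ?x
      \<le> min \<mu>1 1 / (2 * \<mu>2) * exp (2 * (theta lm ep t - D * t))"
    by simp
  also have "\<dots> \<le> (w' t)\<^sup>2 + lm\<^sup>2 * (w t)\<^sup>2"
    using explicit_sol_energy_ge[OF lm less_imp_le[OF ep] D small t]
      solution_eq_explicit_sol[OF lm less_imp_le[OF ep] D init w w' t] by simp
  finally show ?thesis .
qed

lemma c0_lipschitz: "0 \<le> t \<Longrightarrow> 0 \<le> s \<Longrightarrow> \<bar>c0 t - c0 s\<bar> \<le> M * \<bar>t - s\<bar>"
  by (rule deriv_bounded_imp_lipschitz_atLeast[OF c0_deriv abs_c1_le])

lemma sin_phase_lipschitz:
  assumes "0 \<le> lm" "0 \<le> k" "0 \<le> t" "0 \<le> s"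
  shows "\<bar>sin (k * phase c0 lm t) - sin (k * phase c0 lm s)\<bar> \<le> k * sqrt \<mu>2 * lm * \<bar>t - s\<bar>"
proof (rule deriv_bounded_imp_lipschitz_atLeast[OF _ _ assms(4,3)])
  show "((\<lambda>t. sin (k * phase c0 lm t)) has_real_derivative
      cos (k * phase c0 lm x) * (k * (lm * sqrt (c0 x)))) (at x within {0..})" if "0 \<le> x" for x
    using phase_has_real_derivative[OF that] by (auto intro!: derivative_eq_intros)
  show "\<bar>cos (k * phase c0 lm x) * (k * (lm * sqrt (c0 x)))\<bar> \<le> k * sqrt \<mu>2 * lm" if "0 \<le> x" for x
  proof -
    have "\<bar>cos (k * phase c0 lm x)\<bar> * (k * (lm * sqrt (c0 x))) \<le> 1 * (k * (lm * sqrt \<mu>2))"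
      using sqrt_c0_bounds[OF that] c0_pos[OF that] assms(1,2) by (intro mult_mono mult_left_mono) auto
    then show ?thesis using assms(1,2) c0_pos[OF that] by (simp add: abs_mult mult_ac)
  qed
qed

lemma sin_double_phase_holder:
  assumes "0 \<le> \<alpha>" "\<alpha> \<le> 1" "0 \<le> lm" "0 \<le> t" "0 \<le> s"
  shows "\<bar>sin (2 * phase c0 lm t) - sin (2 * phase c0 lm s)\<bar>
    \<le> 2 * \<mu>2 powr (\<alpha> / 2) * lm powr \<alpha> * \<bar>t - s\<bar> powr \<alpha>"
proof -
  have "\<bar>sin (2 * phase c0 lm t) - sin (2 * phase c0 lm s)\<bar> \<le> 2"
    using abs_sin_le_one[of "2 * phase c0 lm t"] abs_sin_le_one[of "2 * phase c0 lm s"] by linarith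
  then have "\<bar>sin (2 * phase c0 lm t) - sin (2 * phase c0 lm s)\<bar>
      \<le> 2 powr (1 - \<alpha>) * (2 * sqrt \<mu>2 * lm * \<bar>t - s\<bar>) powr \<alpha>"
    using sin_phase_lipschitz[of lm 2 t s] assms by (intro le_powr_interpolation) auto
  also have "\<dots> = (2 powr (1 - \<alpha>) * 2 powr \<alpha>) * sqrt \<mu>2 powr \<alpha> * lm powr \<alpha> * \<bar>t - s\<bar> powr \<alpha>"
    using assms(3) by (simp add: powr_mult mult_ac)
  also have "2 powr (1 - \<alpha>) * 2 powr \<alpha> = (2::real)"
    by (simp flip: powr_add)
  also have "sqrt \<mu>2 powr \<alpha> = \<mu>2 powr (\<alpha> / 2)"
    using mu2_pos by (simp add: powr_half_sqrt[symmetric] powr_powr)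
  finally show ?thesis .
qed

lemma bounded_lipschitz_family_sin_phase: "bounded_lipschitz_family (\<lambda>lm t. sin (phase c0 lm t))"
  by (rule bounded_lipschitz_familyI[where B=1 and L="sqrt \<mu>2"])
    (use sin_phase_lipschitz[where k=1] mu2_pos in auto)

lemma bounded_lipschitz_family_c0: "bounded_lipschitz_family (\<lambda>lm. c0)"
  by (rule bounded_lipschitz_family_const[where B=\<mu>2, OF _ c0_lipschitz])
    (use c0_bounds c0_pos in force)

lemma bounded_lipschitz_family_c1: "bounded_lipschitz_family (\<lambda>lm. c1)"
  by (rule bounded_lipschitz_family_const[OF abs_c1_le
        deriv_bounded_imp_lipschitz_atLeast[OF c1_deriv abs_c2_le]])

lemma bounded_lipschitz_family_c2: "bounded_lipschitz_family (\<lambda>lm. c2)"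
  by (rule bounded_lipschitz_family_const[OF abs_c2_le
        deriv_bounded_imp_lipschitz_atLeast[OF c2_deriv abs_c3_le]])

lemma bounded_lipschitz_family_sqrt_c0: "bounded_lipschitz_family (\<lambda>lm t. sqrt (c0 t))"
proof (rule bounded_lipschitz_family_const[where B="sqrt \<mu>2"])
  show "\<bar>sqrt (c0 t)\<bar> \<le> sqrt \<mu>2" if "0 \<le> t" for t
    using sqrt_c0_bounds[OF that] c0_pos[OF that] by simp
  show "\<bar>sqrt (c0 t) - sqrt (c0 s)\<bar> \<le> M / (2 * sqrt \<mu>1) * \<bar>t - s\<bar>" if "0 \<le> t" "0 \<le> s" for t s
  proof (rule deriv_bounded_imp_lipschitz_atLeast[OF sqrt_c0_has_real_derivative _ that(2,1)])
    show "\<bar>c1 x / (2 * sqrt (c0 x))\<bar> \<le> M / (2 * sqrt \<mu>1)" if "0 \<le> x" for x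
      using abs_c1_le[OF that] sqrt_c0_bounds[OF that] mu1_pos M_nonneg
      by (simp add: abs_div) (intro frac_le, auto)
  qed
qed

lemma bounded_lipschitz_family_inverse_c0: "bounded_lipschitz_family (\<lambda>lm t. 1 / c0 t)"
  by (rule bounded_lipschitz_family_inverse[OF bounded_lipschitz_family_c0 mu1_pos]) (use c0_bounds in auto)

lemma bounded_lipschitz_family_inverse_sqrt_c0: "bounded_lipschitz_family (\<lambda>lm t. 1 / sqrt (c0 t))"
  by (rule bounded_lipschitz_family_inverse[OF bounded_lipschitz_family_sqrt_c0, of "sqrt \<mu>1"])
    (use sqrt_c0_bounds mu1_pos in auto)

lemma bounded_lipschitz_family_sin4_div_c0:
  "bounded_lipschitz_family (\<lambda>lm t. sin (phase c0 lm t) ^ 4 / c0 t)"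
  using bounded_lipschitz_family_mult[OF bounded_lipschitz_family_mult[OF bounded_lipschitz_family_mult[OF
      bounded_lipschitz_family_mult[OF bounded_lipschitz_family_sin_phase bounded_lipschitz_family_sin_phase]
      bounded_lipschitz_family_sin_phase] bounded_lipschitz_family_sin_phase] bounded_lipschitz_family_inverse_c0]
  by (simp add: power4_eq_xxxx)

lemma bounded_lipschitz_family_c1_div_c0_sq: "bounded_lipschitz_family (\<lambda>lm t. (c1 t / c0 t)\<^sup>2)"
  using bounded_lipschitz_family_mult[OF
      bounded_lipschitz_family_mult[OF bounded_lipschitz_family_c1 bounded_lipschitz_family_inverse_c0]
      bounded_lipschitz_family_mult[OF bounded_lipschitz_family_c1 bounded_lipschitz_family_inverse_c0]]
  by (simp add: power2_eq_square)

lemma bounded_lipschitz_family_c1_sin2_div_c0_powr: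
  "bounded_lipschitz_family (\<lambda>lm t. c1 t / c0 t powr (3/2) * (sin (phase c0 lm t))\<^sup>2)"
  by (rule bounded_lipschitz_family_cong[OF bounded_lipschitz_family_mult[OF bounded_lipschitz_family_mult[OF
        bounded_lipschitz_family_mult[OF bounded_lipschitz_family_c1 bounded_lipschitz_family_inverse_c0]
        bounded_lipschitz_family_inverse_sqrt_c0]
        bounded_lipschitz_family_mult[OF bounded_lipschitz_family_sin_phase bounded_lipschitz_family_sin_phase]]])
    (simp add: power2_eq_square c0_powr_three_halves)

lemma bounded_lipschitz_family_c2_div_c0: "bounded_lipschitz_family (\<lambda>lm t. c2 t / c0 t)"
  using bounded_lipschitz_family_mult[OF bounded_lipschitz_family_c2 bounded_lipschitz_family_inverse_c0] by simp

definition gammaD_remainder :: "real \<Rightarrow> real \<Rightarrow> real \<Rightarrow> real \<Rightarrow> real" where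
  "gammaD_remainder lm ep D t = gammaD lm ep D t - c0 t + ep * sin (2 * phase c0 lm t)"

lemma gammaD_remainder_terms_holder:
  assumes "0 \<le> \<alpha>" "\<alpha> \<le> 1"
  obtains K where "0 \<le> K" "\<And>lm t s. 1 \<le> lm \<Longrightarrow> 0 \<le> t \<Longrightarrow> 0 \<le> s \<Longrightarrow>
      \<bar>sin (phase c0 lm t) ^ 4 / c0 t - sin (phase c0 lm s) ^ 4 / c0 s\<bar> \<le> K * lm powr \<alpha> * \<bar>t - s\<bar> powr \<alpha>
      \<and> \<bar>(c1 t / c0 t)\<^sup>2 - (c1 s / c0 s)\<^sup>2\<bar> \<le> K * lm powr \<alpha> * \<bar>t - s\<bar> powr \<alpha>
      \<and> \<bar>c1 t / c0 t powr (3/2) * (sin (phase c0 lm t))\<^sup>2 - c1 s / c0 s powr (3/2) * (sin (phase c0 lm s))\<^sup>2\<bar>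
          \<le> K * lm powr \<alpha> * \<bar>t - s\<bar> powr \<alpha>
      \<and> \<bar>c2 t / c0 t - c2 s / c0 s\<bar> \<le> K * lm powr \<alpha> * \<bar>t - s\<bar> powr \<alpha>"
proof -
  from bounded_lipschitz_family_holder[OF bounded_lipschitz_family_sin4_div_c0 assms] obtain K2 where K2: "0 \<le> K2"
    "\<And>lm t s. 1 \<le> lm \<Longrightarrow> 0 \<le> t \<Longrightarrow> 0 \<le> s \<Longrightarrow>
      \<bar>sin (phase c0 lm t) ^ 4 / c0 t - sin (phase c0 lm s) ^ 4 / c0 s\<bar> \<le> K2 * lm powr \<alpha> * \<bar>t - s\<bar> powr \<alpha>" by blast
  from bounded_lipschitz_family_holder[OF bounded_lipschitz_family_c1_div_c0_sq assms] obtain K3 where K3: "0 \<le> K3"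
    "\<And>lm t s. 1 \<le> lm \<Longrightarrow> 0 \<le> t \<Longrightarrow> 0 \<le> s \<Longrightarrow>
      \<bar>(c1 t / c0 t)\<^sup>2 - (c1 s / c0 s)\<^sup>2\<bar> \<le> K3 * lm powr \<alpha> * \<bar>t - s\<bar> powr \<alpha>" by blast
  from bounded_lipschitz_family_holder[OF bounded_lipschitz_family_c1_sin2_div_c0_powr assms] obtain K4 where K4: "0 \<le> K4"
    "\<And>lm t s. 1 \<le> lm \<Longrightarrow> 0 \<le> t \<Longrightarrow> 0 \<le> s \<Longrightarrow>
      \<bar>c1 t / c0 t powr (3/2) * (sin (phase c0 lm t))\<^sup>2 - c1 s / c0 s powr (3/2) * (sin (phase c0 lm s))\<^sup>2\<bar>
        \<le> K4 * lm powr \<alpha> * \<bar>t - s\<bar> powr \<alpha>" by blast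
  from bounded_lipschitz_family_holder[OF bounded_lipschitz_family_c2_div_c0 assms] obtain K5 where K5: "0 \<le> K5"
    "\<And>lm t s. 1 \<le> lm \<Longrightarrow> 0 \<le> t \<Longrightarrow> 0 \<le> s \<Longrightarrow>
      \<bar>c2 t / c0 t - c2 s / c0 s\<bar> \<le> K5 * lm powr \<alpha> * \<bar>t - s\<bar> powr \<alpha>" by blast
  have le_sum: "Ki * lm powr \<alpha> * \<bar>t - s\<bar> powr \<alpha> \<le> (K2 + K3 + K4 + K5) * lm powr \<alpha> * \<bar>t - s\<bar> powr \<alpha>"
    if "Ki \<in> {K2, K3, K4, K5}" for Ki lm t s
    using that K2(1) K3(1) K4(1) K5(1) by (intro mult_right_mono) auto
  show ?thesis
    by (rule that[of "K2 + K3 + K4 + K5"])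
      (use K2 K3 K4 K5 le_sum in \<open>meson insertCI order_trans add_nonneg_nonneg\<close>)+
qed

lemma gammaD_remainder_holder:
  assumes "0 \<le> \<alpha>" "\<alpha> \<le> 1"
  obtains K where "0 \<le> K"
    "\<And>lm ep D t s. 1 \<le> lm \<Longrightarrow> 0 \<le> ep \<Longrightarrow> 0 \<le> t \<Longrightarrow> 0 \<le> s \<Longrightarrow>
      \<bar>gammaD_remainder lm ep D t - gammaD_remainder lm ep D s\<bar>
        \<le> K * (ep\<^sup>2 + ep / lm + 1 / lm\<^sup>2) * lm powr \<alpha> * \<bar>t - s\<bar> powr \<alpha>"
proof -
  obtain K where K: "0 \<le> K" "\<And>lm t s. 1 \<le> lm \<Longrightarrow> 0 \<le> t \<Longrightarrow> 0 \<le> s \<Longrightarrow>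
      \<bar>sin (phase c0 lm t) ^ 4 / c0 t - sin (phase c0 lm s) ^ 4 / c0 s\<bar> \<le> K * lm powr \<alpha> * \<bar>t - s\<bar> powr \<alpha>
      \<and> \<bar>(c1 t / c0 t)\<^sup>2 - (c1 s / c0 s)\<^sup>2\<bar> \<le> K * lm powr \<alpha> * \<bar>t - s\<bar> powr \<alpha>
      \<and> \<bar>c1 t / c0 t powr (3/2) * (sin (phase c0 lm t))\<^sup>2 - c1 s / c0 s powr (3/2) * (sin (phase c0 lm s))\<^sup>2\<bar>
          \<le> K * lm powr \<alpha> * \<bar>t - s\<bar> powr \<alpha>
      \<and> \<bar>c2 t / c0 t - c2 s / c0 s\<bar> \<le> K * lm powr \<alpha> * \<bar>t - s\<bar> powr \<alpha>"
    using gammaD_remainder_terms_holder[OF assms] by blast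
  show ?thesis
  proof (rule that)
    show "0 \<le> K" by (rule K(1))
    fix lm ep D t s :: real assume lm: "1 \<le> lm" and ep: "0 \<le> ep" and ts: "0 \<le> t" "0 \<le> s"
    define Q where "Q = lm powr \<alpha> * \<bar>t - s\<bar> powr \<alpha>"
    have Q: "0 \<le> Q" unfolding Q_def by simp
    have scale: "\<bar>c * A\<bar> \<le> d * (K * Q)" if "\<bar>A\<bar> \<le> K * Q" "\<bar>c\<bar> \<le> d" for c d A
      using that Q K(1) by (simp add: abs_mult mult_mono)
    define A2 A3 A4 A5 where
      "A2 = sin (phase c0 lm t) ^ 4 / c0 t - sin (phase c0 lm s) ^ 4 / c0 s"
      and "A3 = (c1 t / c0 t)\<^sup>2 - (c1 s / c0 s)\<^sup>2"
      and "A4 = c1 t / c0 t powr (3/2) * (sin (phase c0 lm t))\<^sup>2 - c1 s / c0 s powr (3/2) * (sin (phase c0 lm s))\<^sup>2"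
      and "A5 = c2 t / c0 t - c2 s / c0 s"
    have A: "\<bar>A2\<bar> \<le> K * Q" "\<bar>A3\<bar> \<le> K * Q" "\<bar>A4\<bar> \<le> K * Q" "\<bar>A5\<bar> \<le> K * Q"
      using K(2)[OF lm ts] unfolding A2_def A3_def A4_def A5_def Q_def by (simp_all add: mult.assoc)
    have "\<bar>- (ep\<^sup>2 / 4) * A2\<bar> \<le> ep\<^sup>2 * (K * Q)"
      by (rule scale[OF A(1)]) auto
    moreover have "\<bar>- (5 / (16 * lm\<^sup>2)) * A3\<bar> \<le> 5 / 16 * (1 / lm\<^sup>2 * (K * Q))"
      using scale[OF A(2), of "- (5 / (16 * lm\<^sup>2))" "5 / 16 * (1 / lm\<^sup>2)"] by simp
    moreover have "\<bar>ep / (2 * lm) * A4\<bar> \<le> ep / lm * (K * Q)"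
      by (rule scale[OF A(3)]) (use ep lm in \<open>auto simp: frac_le\<close>)
    moreover have "\<bar>1 / (4 * lm\<^sup>2) * A5\<bar> \<le> 1 / 4 * (1 / lm\<^sup>2 * (K * Q))"
      using scale[OF A(4), of "1 / (4 * lm\<^sup>2)" "1 / 4 * (1 / lm\<^sup>2)"] by simp
    moreover have "gammaD_remainder lm ep D t - gammaD_remainder lm ep D s
      = - (ep\<^sup>2 / 4) * A2 + - (5 / (16 * lm\<^sup>2)) * A3 + ep / (2 * lm) * A4 + 1 / (4 * lm\<^sup>2) * A5"
      unfolding gammaD_remainder_def gammaD_def Let_def A2_def A3_def A4_def A5_def
      by (simp only: right_diff_distrib mult_minus_left)
    moreover have "K * (ep\<^sup>2 + ep / lm + 1 / lm\<^sup>2) * lm powr \<alpha> * \<bar>t - s\<bar> powr \<alpha>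
      = ep\<^sup>2 * (K * Q) + ep / lm * (K * Q) + 1 / lm\<^sup>2 * (K * Q)"
      unfolding Q_def by (simp add: algebra_simps)
    moreover have "0 \<le> 1 / lm\<^sup>2 * (K * Q)" using Q K(1) by simp
    ultimately show "\<bar>gammaD_remainder lm ep D t - gammaD_remainder lm ep D s\<bar>
        \<le> K * (ep\<^sup>2 + ep / lm + 1 / lm\<^sup>2) * lm powr \<alpha> * \<bar>t - s\<bar> powr \<alpha>"
      by linarith
  qed
qed

text \<open>Pairs with \<open>|t - s| \<ge> h\<close> are handled with the sup bound of \<open>sin 2a\<close>, pairs with \<open>|t - s| < h\<close>
  with the Lipschitz bound of \<open>c0\<close> and the Hoelder bound of \<open>sin 2a\<close>.\<close>

lemma Hold_gammaD_le:
  assumes \<alpha>: "0 \<le> \<alpha>" "\<alpha> \<le> 1" and lm: "0 \<le> lm" and ep: "0 \<le> ep" and h: "0 < h"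
    and H0: "\<And>t s. 0 \<le> t \<Longrightarrow> 0 \<le> s \<Longrightarrow> \<bar>c0 t - c0 s\<bar> \<le> H0 * \<bar>t - s\<bar> powr \<alpha>"
    and R: "\<And>t s. 0 \<le> t \<Longrightarrow> 0 \<le> s \<Longrightarrow>
      \<bar>gammaD_remainder lm ep D t - gammaD_remainder lm ep D s\<bar> \<le> \<eta> * \<bar>t - s\<bar> powr \<alpha>"
  shows "Hold \<alpha> (gammaD lm ep D) \<le> ereal (max (H0 + 2 * ep / h powr \<alpha> + \<eta>)
    (M * h powr (1 - \<alpha>) + 2 * \<mu>2 powr (\<alpha> / 2) * (ep * lm powr \<alpha>) + \<eta>))"
  unfolding Hold_def
proof (rule SUP_least)
  let ?B = "max (H0 + 2 * ep / h powr \<alpha> + \<eta>) (M * h powr (1 - \<alpha>) + 2 * \<mu>2 powr (\<alpha> / 2) * (ep * lm powr \<alpha>) + \<eta>)"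
  fix p assume "p \<in> {(t::real, s::real). 0 \<le> t \<and> 0 \<le> s \<and> t \<noteq> s}"
  then obtain t s where p: "p = (t, s)" and ts: "0 \<le> t" "0 \<le> s" "t \<noteq> s" by auto
  define d where "d = \<bar>t - s\<bar>"
  have d: "0 < d" "0 < d powr \<alpha>" unfolding d_def using ts by auto
  define S where "S = sin (2 * phase c0 lm t) - sin (2 * phase c0 lm s)"
  have "gammaD lm ep D t - gammaD lm ep D s
      = (c0 t - c0 s) - ep * S + (gammaD_remainder lm ep D t - gammaD_remainder lm ep D s)"
    unfolding S_def gammaD_remainder_def by (simp add: algebra_simps)
  moreover have "\<bar>ep * S\<bar> = ep * \<bar>S\<bar>" using ep by (simp add: abs_mult)
  ultimately have tri: "\<bar>gammaD lm ep D t - gammaD lm ep D s\<bar> \<le> \<bar>c0 t - c0 s\<bar> + ep * \<bar>S\<bar> + \<eta> * d powr \<alpha>"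
    using R[OF ts(1,2)] unfolding d_def by arith
  have "\<bar>gammaD lm ep D t - gammaD lm ep D s\<bar> \<le> ?B * d powr \<alpha>"
  proof (cases "h \<le> d")
    case True
    have "h powr \<alpha> \<le> d powr \<alpha>" using True h \<alpha> by (intro powr_mono2) auto
    then have "2 \<le> 2 * d powr \<alpha> / h powr \<alpha>" using h by (simp add: field_simps)
    moreover have "\<bar>S\<bar> \<le> 2"
      unfolding S_def using abs_sin_le_one[of "2 * phase c0 lm t"] abs_sin_le_one[of "2 * phase c0 lm s"]
      by linarith
    ultimately have "ep * \<bar>S\<bar> \<le> ep * (2 * d powr \<alpha> / h powr \<alpha>)"
      using ep by (intro mult_left_mono) auto
    then have "\<bar>gammaD lm ep D t - gammaD lm ep D s\<bar> \<le> (H0 + 2 * ep / h powr \<alpha> + \<eta>) * d powr \<alpha>"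
      using tri H0[OF ts(1,2)] unfolding d_def by (simp add: algebra_simps)
    also have "\<dots> \<le> ?B * d powr \<alpha>"
      using d by (intro mult_right_mono) auto
    finally show ?thesis .
  next
    case False
    have "\<bar>c0 t - c0 s\<bar> \<le> M * d" unfolding d_def by (rule c0_lipschitz[OF ts(1,2)])
    also have "M * d = M * d powr (1 - \<alpha>) * d powr \<alpha>" using d by (simp add: mult.assoc flip: powr_add)
    also have "\<dots> \<le> M * h powr (1 - \<alpha>) * d powr \<alpha>"
      using False \<alpha> d M_nonneg by (intro mult_right_mono mult_left_mono powr_mono2) auto
    finally have "\<bar>c0 t - c0 s\<bar> \<le> M * h powr (1 - \<alpha>) * d powr \<alpha>" .
    moreover have "ep * \<bar>S\<bar> \<le> ep * (2 * \<mu>2 powr (\<alpha> / 2) * lm powr \<alpha> * d powr \<alpha>)"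
      unfolding S_def d_def using sin_double_phase_holder[OF \<alpha> lm ts(1,2)] ep by (intro mult_left_mono) auto
    ultimately have "\<bar>gammaD lm ep D t - gammaD lm ep D s\<bar>
        \<le> (M * h powr (1 - \<alpha>) + 2 * \<mu>2 powr (\<alpha> / 2) * (ep * lm powr \<alpha>) + \<eta>) * d powr \<alpha>"
      using tri by (simp add: algebra_simps)
    also have "\<dots> \<le> ?B * d powr \<alpha>"
      using d by (intro mult_right_mono) auto
    finally show ?thesis .
  qed
  then have "\<bar>gammaD lm ep D t - gammaD lm ep D s\<bar> / \<bar>t - s\<bar> powr \<alpha> \<le> ?B"
    using d unfolding d_def by (simp add: divide_le_eq)
  then show "ereal (\<bar>gammaD lm ep D (fst p) - gammaD lm ep D (snd p)\<bar> / \<bar>fst p - snd p\<bar> powr \<alpha>) \<le> ereal ?B"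
    unfolding p fst_conv snd_conv ereal_less_eq(3) .
qed

context
  fixes lam eps :: "nat \<Rightarrow> real"
  assumes lam_pos: "\<And>n. 0 < lam n" and lam_to_infinity: "filterlim lam at_top sequentially"
    and eps_pos: "\<And>n. 0 < eps n" and eps_to_zero: "eps \<longlonglongrightarrow> 0"
begin

lemma gammaD_deviation_bound_tendsto_zero:
  assumes \<sigma>: "\<sigma> < 1/2"
  shows "(\<lambda>n. gammaD_deviation_bound (lam n) (eps n) (\<delta> * lam n powr (2 * \<sigma>))) \<longlonglongrightarrow> 0"
proof -
  have "gammaD_deviation_bound (lam n) (eps n) (\<delta> * lam n powr (2 * \<sigma>))
      = eps n + (eps n)\<^sup>2 / (4 * \<mu>1) + 5 * M\<^sup>2 / (16 * \<mu>1\<^sup>2) * (inverse (lam n))\<^sup>2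
        + M / (2 * (\<mu>1 * sqrt \<mu>1)) * eps n * inverse (lam n) + M / (4 * \<mu>1) * (inverse (lam n))\<^sup>2
        + \<delta>\<^sup>2 * lam n powr (4 * \<sigma> - 2)" for n
  proof -
    have "(lam n powr (2 * \<sigma>))\<^sup>2 / (lam n)\<^sup>2 = lam n powr (4 * \<sigma> - 2)"
      using lam_pos[of n] by (simp add: powr_diff power2_eq_square flip: powr_add)
    then show ?thesis
      unfolding gammaD_deviation_bound_def using lam_pos[of n]
      by (simp add: power_mult_distrib power2_eq_square field_simps)
  qed
  moreover have "(\<lambda>n. eps n + (eps n)\<^sup>2 / (4 * \<mu>1) + 5 * M\<^sup>2 / (16 * \<mu>1\<^sup>2) * (inverse (lam n))\<^sup>2
        + M / (2 * (\<mu>1 * sqrt \<mu>1)) * eps n * inverse (lam n) + M / (4 * \<mu>1) * (inverse (lam n))\<^sup>2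
        + \<delta>\<^sup>2 * lam n powr (4 * \<sigma> - 2)) \<longlonglongrightarrow> 0 + 0\<^sup>2 / (4 * \<mu>1) + 5 * M\<^sup>2 / (16 * \<mu>1\<^sup>2) * 0\<^sup>2
        + M / (2 * (\<mu>1 * sqrt \<mu>1)) * 0 * 0 + M / (4 * \<mu>1) * 0\<^sup>2 + \<delta>\<^sup>2 * 0"
    using \<sigma> mu1_pos by (intro tendsto_intros eps_to_zero tendsto_inverse_0_at_top[OF lam_to_infinity] tendsto_neg_powr lam_to_infinity) auto
  ultimately show ?thesis by simp
qed

lemma uniform_limit_gamma:
  assumes \<sigma>: "\<sigma> < 1/2"
  shows "uniform_limit {0..} (\<lambda>n. gamma c0 c1 c2 \<delta> \<sigma> (eps n) (lam n)) c0 sequentially"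
proof (rule uniform_limitI)
  fix e :: real assume "0 < e"
  with gammaD_deviation_bound_tendsto_zero[OF \<sigma>]
  have "\<forall>\<^sub>F n in sequentially. gammaD_deviation_bound (lam n) (eps n) (\<delta> * lam n powr (2 * \<sigma>)) < e"
    by (rule order_tendstoD)
  then show "\<forall>\<^sub>F n in sequentially. \<forall>t\<in>{0..}. dist (gamma c0 c1 c2 \<delta> \<sigma> (eps n) (lam n) t) (c0 t) < e"
  proof eventually_elim
    case (elim n)
    show ?case
    proof
      fix t :: real assume "t \<in> {0..}"
      then have "\<bar>gammaD (lam n) (eps n) (\<delta> * lam n powr (2 * \<sigma>)) t - c0 t\<bar>
          \<le> gammaD_deviation_bound (lam n) (eps n) (\<delta> * lam n powr (2 * \<sigma>))"
        by (intro abs_gammaD_minus_c0_le lam_pos less_imp_le[OF eps_pos]) simp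
      with elim have "\<bar>gammaD (lam n) (eps n) (\<delta> * lam n powr (2 * \<sigma>)) t - c0 t\<bar> < e" by linarith
      then show "dist (gamma c0 c1 c2 \<delta> \<sigma> (eps n) (lam n) t) (c0 t) < e"
        by (simp add: gamma_eq_gammaD[OF lam_pos] dist_real_def)
    qed
  qed
qed

lemma holder_coefficient_tendsto_zero:
  assumes \<alpha>: "\<alpha> < 1" and bounded: "limsup (\<lambda>n. ereal (eps n * lam n powr \<alpha>)) < \<infinity>"
  shows "(\<lambda>n. ((eps n)\<^sup>2 + eps n / lam n + 1 / (lam n)\<^sup>2) * lam n powr \<alpha>) \<longlonglongrightarrow> 0"
proof -
  obtain B where "limsup (\<lambda>n. ereal (eps n * lam n powr \<alpha>)) < ereal B"
    using ereal_dense2[OF bounded] by blast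
  from Limsup_lessD[OF this] have "\<forall>\<^sub>F n in sequentially. eps n * lam n powr \<alpha> < B"
    by simp
  then have upper: "\<forall>\<^sub>F n in sequentially. eps n * (eps n * lam n powr \<alpha>) \<le> eps n * B"
    by eventually_elim (use eps_pos in \<open>simp add: less_imp_le\<close>)
  have lower: "\<forall>\<^sub>F n in sequentially. 0 \<le> eps n * (eps n * lam n powr \<alpha>)"
    using eps_pos by (intro always_eventually allI) (simp add: less_imp_le)
  have "(\<lambda>n. eps n * (eps n * lam n powr \<alpha>)) \<longlonglongrightarrow> 0"
    using tendsto_sandwich[OF lower upper tendsto_const tendsto_mult_left_zero[OF eps_to_zero]] .
  moreover have "(\<lambda>n. eps n * lam n powr (\<alpha> - 1) + lam n powr (\<alpha> - 2)) \<longlonglongrightarrow> 0 * 0 + 0"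
    using \<alpha> by (intro tendsto_intros eps_to_zero tendsto_neg_powr lam_to_infinity) auto
  ultimately have "(\<lambda>n. eps n * (eps n * lam n powr \<alpha>) + (eps n * lam n powr (\<alpha> - 1) + lam n powr (\<alpha> - 2)))
      \<longlonglongrightarrow> 0 + (0 * 0 + 0)"
    by (rule tendsto_add)
  moreover have "eps n * (eps n * lam n powr \<alpha>) + (eps n * lam n powr (\<alpha> - 1) + lam n powr (\<alpha> - 2))
      = ((eps n)\<^sup>2 + eps n / lam n + 1 / (lam n)\<^sup>2) * lam n powr \<alpha>" for n
  proof -
    have "lam n powr (\<alpha> - 1) = lam n powr \<alpha> / lam n" "lam n powr (\<alpha> - 2) = lam n powr \<alpha> / (lam n)\<^sup>2"
      using lam_pos[of n] by (simp_all add: powr_diff)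
    then show ?thesis by (simp add: algebra_simps divide_inverse power2_eq_square)
  qed
  ultimately show ?thesis by simp
qed

lemma eventually_gammaD_remainder_holder:
  assumes \<alpha>: "0 < \<alpha>" "\<alpha> < 1" and bounded: "limsup (\<lambda>n. ereal (eps n * lam n powr \<alpha>)) < \<infinity>" and e: "0 < e"
  shows "\<forall>\<^sub>F n in sequentially. \<forall>D t s. 0 \<le> t \<longrightarrow> 0 \<le> s \<longrightarrow>
    \<bar>gammaD_remainder (lam n) (eps n) D t - gammaD_remainder (lam n) (eps n) D s\<bar> \<le> e * \<bar>t - s\<bar> powr \<alpha>"
proof -
  obtain K where K: "0 \<le> K" "\<And>lm ep D t s. 1 \<le> lm \<Longrightarrow> 0 \<le> ep \<Longrightarrow> 0 \<le> t \<Longrightarrow> 0 \<le> s \<Longrightarrow>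
      \<bar>gammaD_remainder lm ep D t - gammaD_remainder lm ep D s\<bar>
        \<le> K * (ep\<^sup>2 + ep / lm + 1 / lm\<^sup>2) * lm powr \<alpha> * \<bar>t - s\<bar> powr \<alpha>"
    using gammaD_remainder_holder[of \<alpha>] \<alpha> by auto
  have "(\<lambda>n. K * (((eps n)\<^sup>2 + eps n / lam n + 1 / (lam n)\<^sup>2) * lam n powr \<alpha>)) \<longlonglongrightarrow> K * 0"
    by (intro tendsto_mult_left holder_coefficient_tendsto_zero \<alpha>(2) bounded)
  then have "\<forall>\<^sub>F n in sequentially. K * (((eps n)\<^sup>2 + eps n / lam n + 1 / (lam n)\<^sup>2) * lam n powr \<alpha>) < e"
    using e by (simp add: order_tendstoD(2))
  moreover have "\<forall>\<^sub>F n in sequentially. 1 \<le> lam n"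
    using lam_to_infinity by (simp add: filterlim_at_top)
  ultimately show ?thesis
  proof eventually_elim
    case (elim n)
    show ?case
    proof (intro allI impI)
      fix D t s :: real assume ts: "0 \<le> t" "0 \<le> s"
      have "\<bar>gammaD_remainder (lam n) (eps n) D t - gammaD_remainder (lam n) (eps n) D s\<bar>
          \<le> K * (((eps n)\<^sup>2 + eps n / lam n + 1 / (lam n)\<^sup>2) * lam n powr \<alpha>) * \<bar>t - s\<bar> powr \<alpha>"
        using K(2)[OF elim(2) less_imp_le[OF eps_pos] ts] by (simp add: mult.assoc)
      also have "\<dots> \<le> e * \<bar>t - s\<bar> powr \<alpha>"
        using elim(1) by (intro mult_right_mono) auto
      finally show "\<bar>gammaD_remainder (lam n) (eps n) D t - gammaD_remainder (lam n) (eps n) D s\<bar>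
          \<le> e * \<bar>t - s\<bar> powr \<alpha>" .
    qed
  qed
qed

lemma eventually_Hold_gamma_le:
  assumes \<alpha>: "0 < \<alpha>" "\<alpha> < 1" and H0: "Hold \<alpha> c0 \<le> ereal H0"
    and L: "limsup (\<lambda>n. ereal (eps n * lam n powr \<alpha>)) = ereal L" and e: "0 < e"
  shows "\<forall>\<^sub>F n in sequentially.
    Hold \<alpha> (gamma c0 c1 c2 \<delta> \<sigma> (eps n) (lam n)) \<le> ereal (max H0 (2 * \<mu>2 powr (\<alpha> / 2) * L) + e)"
proof -
  define k where "k = 2 * \<mu>2 powr (\<alpha> / 2)"
  have k: "0 \<le> k" unfolding k_def by simp
  define e1 where "e1 = e / (2 + k)"
  have e1: "0 < e1" "(2 + k) * e1 = e" unfolding e1_def using e k by auto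
  define h where "h = (e1 / (M + 1)) powr (1 / (1 - \<alpha>))"
  have h: "0 < h" unfolding h_def using e1 M_nonneg by simp
  have "h powr (1 - \<alpha>) = e1 / (M + 1)" unfolding h_def using e1 M_nonneg \<alpha> by (simp add: powr_powr)
  then have Mh: "M * h powr (1 - \<alpha>) \<le> e1"
    using e1 M_nonneg by (simp add: divide_le_eq)
  have "\<forall>\<^sub>F n in sequentially. eps n * lam n powr \<alpha> < L + e1"
    using Limsup_lessD[where f="\<lambda>n. ereal (eps n * lam n powr \<alpha>)" and F=sequentially and y="ereal (L + e1)"]
      L e1 by simp
  moreover have "\<forall>\<^sub>F n in sequentially. 2 * eps n / h powr \<alpha> < e1"
  proof -
    have "(\<lambda>n. 2 * eps n / h powr \<alpha>) \<longlonglongrightarrow> 2 * 0 / h powr \<alpha>"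
      using h by (intro tendsto_intros eps_to_zero) auto
    then show ?thesis using order_tendstoD(2)[of _ "2 * 0 / h powr \<alpha>" _ e1] e1 by simp
  qed
  moreover have "\<forall>\<^sub>F n in sequentially. \<forall>D t s. 0 \<le> t \<longrightarrow> 0 \<le> s \<longrightarrow>
      \<bar>gammaD_remainder (lam n) (eps n) D t - gammaD_remainder (lam n) (eps n) D s\<bar> \<le> e1 * \<bar>t - s\<bar> powr \<alpha>"
    using L by (intro eventually_gammaD_remainder_holder \<alpha> e1) simp
  ultimately show ?thesis
  proof eventually_elim
    case (elim n)
    have "Hold \<alpha> (gamma c0 c1 c2 \<delta> \<sigma> (eps n) (lam n))
        \<le> ereal (max (H0 + 2 * eps n / h powr \<alpha> + e1) (M * h powr (1 - \<alpha>) + k * (eps n * lam n powr \<alpha>) + e1))"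
      unfolding gamma_eq_gammaD[OF lam_pos] k_def
      by (rule Hold_gammaD_le[OF _ _ _ _ h Hold_le_ereal_imp_holder[OF H0]])
        (use \<alpha> lam_pos eps_pos less_imp_le elim(3) in auto)
    also have "\<dots> \<le> ereal (max H0 (k * L) + e)"
    proof -
      have "k * (eps n * lam n powr \<alpha>) \<le> k * (L + e1)"
        using elim(1) k by (intro mult_left_mono) auto
      then show ?thesis
        using elim(2) Mh e1 k by (simp add: algebra_simps max_def) (smt (verit) mult_nonneg_nonneg)
    qed
    finally show ?case unfolding k_def .
  qed
qed

lemma limsup_Hold_gamma_le:
  assumes \<alpha>: "0 < \<alpha>" "\<alpha> < 1" and bounded: "limsup (\<lambda>n. ereal (eps n * lam n powr \<alpha>)) < \<infinity>"
  shows "limsup (\<lambda>n. Hold \<alpha> (gamma c0 c1 c2 \<delta> \<sigma> (eps n) (lam n)))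
    \<le> max (Hold \<alpha> c0) (ereal (2 * \<mu>2 powr (\<alpha> / 2)) * limsup (\<lambda>n. ereal (eps n * lam n powr \<alpha>)))"
proof (cases "Hold \<alpha> c0 = \<infinity>")
  case False
  have "0 \<le> liminf (\<lambda>n. ereal (eps n * lam n powr \<alpha>))"
    using eps_pos lam_pos by (intro Liminf_bounded always_eventually allI) (simp add: less_imp_le)
  then have "0 \<le> limsup (\<lambda>n. ereal (eps n * lam n powr \<alpha>))"
    using Liminf_le_Limsup[of sequentially] by (meson order_trans trivial_limit_sequentially)
  then obtain L where L: "limsup (\<lambda>n. ereal (eps n * lam n powr \<alpha>)) = ereal L"
    using bounded by (cases "limsup (\<lambda>n. ereal (eps n * lam n powr \<alpha>))") auto
  have "ereal (\<bar>c0 1 - c0 0\<bar> / \<bar>1 - 0\<bar> powr \<alpha>) \<le> Hold \<alpha> c0"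
    unfolding Hold_def by (rule SUP_upper2[of "(1, 0)"]) auto
  then obtain H0 where H0: "Hold \<alpha> c0 = ereal H0"
    using False by (cases "Hold \<alpha> c0") auto
  have "limsup (\<lambda>n. Hold \<alpha> (gamma c0 c1 c2 \<delta> \<sigma> (eps n) (lam n))) \<le> ereal (max H0 (2 * \<mu>2 powr (\<alpha> / 2) * L))"
    by (rule Limsup_le_ereal_if_eventually_le, rule eventually_Hold_gamma_le[OF \<alpha> _ L]) (simp_all add: H0)
  then show ?thesis using L H0 by simp
qed simp

lemma eventually_log_amplitude_rate_bound_small:
  assumes \<sigma>: "\<sigma> < 1/2"
  shows "\<forall>\<^sub>F n in sequentially.
    (eps n * lam n / (2 * sqrt \<mu>1) + \<delta> * lam n powr (2 * \<sigma>) + M / (4 * \<mu>1))\<^sup>2 \<le> (lam n)\<^sup>2 / 2"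
proof -
  define r where "r n = eps n / (2 * sqrt \<mu>1) + \<delta> * lam n powr (2 * \<sigma> - 1) + M / (4 * \<mu>1) * inverse (lam n)" for n
  have "r \<longlonglongrightarrow> 0 / (2 * sqrt \<mu>1) + \<delta> * 0 + M / (4 * \<mu>1) * 0"
    unfolding r_def using \<sigma> mu1_pos
    by (intro tendsto_intros eps_to_zero tendsto_inverse_0_at_top lam_to_infinity tendsto_neg_powr) auto
  then have "\<forall>\<^sub>F n in sequentially. \<bar>r n\<bar> < 1/2"
    unfolding tendsto_iff dist_real_def by (auto dest: spec[of _ "1/2"])
  then show ?thesis
  proof eventually_elim
    case (elim n)
    have "lam n * lam n powr (2 * \<sigma> - 1) = lam n powr (2 * \<sigma>)"
      using lam_pos[of n] by (simp add: powr_diff)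
    then have "eps n * lam n / (2 * sqrt \<mu>1) + \<delta> * lam n powr (2 * \<sigma>) + M / (4 * \<mu>1) = lam n * r n"
      unfolding r_def using lam_pos[of n] by (simp add: field_simps)
    moreover have "(r n)\<^sup>2 \<le> (1 / 2)\<^sup>2"
      using elim by (metis abs_ge_zero less_imp_le power2_abs power_mono)
    ultimately show ?case using lam_pos[of n] by (simp add: power_mult_distrib power2_eq_square)
  qed
qed

lemma eventually_energy_growth:
  fixes w w' :: "nat \<Rightarrow> real \<Rightarrow> real"
  assumes \<delta>: "0 \<le> \<delta>" and \<sigma>: "\<sigma> < 1/2"
    and init: "\<And>n. w n 0 = 0" "\<And>n. w' n 0 = 1"
    and w: "\<And>n t. 0 \<le> t \<Longrightarrow> (w n has_real_derivative w' n t) (at t within {0..})"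
    and w': "\<And>n t. 0 \<le> t \<Longrightarrow> (w' n has_real_derivative (- 2 * \<delta> * lam n powr (2 * \<sigma>) * w' n t
      - (lam n)\<^sup>2 * gamma c0 c1 c2 \<delta> \<sigma> (eps n) (lam n) t * w n t)) (at t within {0..})"
  shows "\<forall>\<^sub>F n in sequentially. \<forall>t\<ge>0. (w' n t)\<^sup>2 + (lam n)\<^sup>2 * (w n t)\<^sup>2
    \<ge> \<mu>1 * min 1 \<mu>1 / (2 * \<mu>2\<^sup>2) * exp (1 / (4 * sqrt \<mu>2) * eps n * lam n * t - 2 * \<delta> * lam n powr (2 * \<sigma>) * t)"
proof -
  define D where "D n = \<delta> * lam n powr (2 * \<sigma>)" for n
  have small: "\<forall>\<^sub>F n in sequentially.
      (eps n * lam n / (2 * sqrt \<mu>1) + D n + M / (4 * \<mu>1))\<^sup>2 \<le> (lam n)\<^sup>2 / 2"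
    unfolding D_def by (rule eventually_log_amplitude_rate_bound_small[OF \<sigma>])
  have "\<forall>\<^sub>F n in sequentially. M / (\<mu>1 * sqrt \<mu>1) \<le> lam n"
    using lam_to_infinity by (simp add: filterlim_at_top)
  then have M: "\<forall>\<^sub>F n in sequentially. M \<le> lam n * (\<mu>1 * sqrt \<mu>1)"
    by eventually_elim (use mu1_pos in \<open>simp add: divide_le_eq mult.commute\<close>)
  have "(\<lambda>n. eps n / (2 * sqrt \<mu>1 * sqrt \<mu>2)) \<longlonglongrightarrow> 0 / (2 * sqrt \<mu>1 * sqrt \<mu>2)"
    using mu1_pos mu2_pos by (intro tendsto_intros eps_to_zero) auto
  moreover have "0 < ln (\<mu>2 / \<mu>1)" using mu1_pos mu1_less_mu2 by simp
  ultimately have eps_small: "\<forall>\<^sub>F n in sequentially. eps n / (2 * sqrt \<mu>1 * sqrt \<mu>2) \<le> ln (\<mu>2 / \<mu>1)"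
    using order_tendstoD(2) by (fastforce elim: eventually_mono)
  from small M eps_small show ?thesis
  proof eventually_elim
    case (elim n)
    show ?case
    proof (intro allI impI)
      fix t :: real assume "0 \<le> t"
      have "0 \<le> D n" unfolding D_def using \<delta> by simp
      from energy_growth[OF lam_pos eps_pos this elim init w _ \<open>0 \<le> t\<close>, of n] w'
      show "(w' n t)\<^sup>2 + (lam n)\<^sup>2 * (w n t)\<^sup>2
          \<ge> \<mu>1 * min 1 \<mu>1 / (2 * \<mu>2\<^sup>2) * exp (1 / (4 * sqrt \<mu>2) * eps n * lam n * t - 2 * \<delta> * lam n powr (2 * \<sigma>) * t)"
        by (simp add: D_def gamma_eq_gammaD[OF lam_pos] mult.assoc)
    qed
  qed
qed

end

end


theorem mainTheorem8:
  fixes \<mu>1 \<mu>2 \<alpha> \<delta> \<sigma> :: real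
    and c0 c1 c2 c3 :: "real \<Rightarrow> real"
    and lam eps :: "nat \<Rightarrow> real"
    and w wd :: "nat \<Rightarrow> real \<Rightarrow> real"
  assumes mu: "0 < \<mu>1" "\<mu>1 < \<mu>2"
    and alpha: "0 < \<alpha>" "\<alpha> < 1"
    and delta: "\<delta> \<ge> 0"
    and sigma: "0 < \<sigma>" "\<sigma> < 1/2"
    and c0_pos: "\<And>t. t \<ge> 0 \<Longrightarrow> c0 t > 0"
    and d1: "\<And>t. t \<ge> 0 \<Longrightarrow> (c0 has_real_derivative c1 t) (at t within {0..})"
    and d2: "\<And>t. t \<ge> 0 \<Longrightarrow> (c1 has_real_derivative c2 t) (at t within {0..})"
    and d3: "\<And>t. t \<ge> 0 \<Longrightarrow> (c2 has_real_derivative c3 t) (at t within {0..})"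
    and c3_cont: "continuous_on {0..} c3"
    and c0_bounds: "\<And>t. t \<ge> 0 \<Longrightarrow> \<mu>1 \<le> c0 t \<and> c0 t \<le> \<mu>2"
    and deriv_bdd: "\<exists>M. \<forall>t\<ge>0. \<bar>c1 t\<bar> + \<bar>c2 t\<bar> + \<bar>c3 t\<bar> \<le> M"
    and lam_pos: "\<And>n. lam n > 0"
    and eps_pos: "\<And>n. eps n > 0"
    and lam_lim: "filterlim lam at_top sequentially"
    and eps_lim: "eps \<longlonglongrightarrow> 0"
    and limsup_fin: "limsup (\<lambda>n. ereal (eps n * lam n powr \<alpha>)) < \<infinity>"
    and w_init: "\<And>n. w n 0 = 0" "\<And>n. wd n 0 = 1"
    and w_deriv: "\<And>n t. t \<ge> 0 \<Longrightarrow> (w n has_real_derivative wd n t) (at t within {0..})"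
    and w_ode: "\<And>n t. t \<ge> 0 \<Longrightarrow> (wd n has_real_derivative
        (- 2 * \<delta> * lam n powr (2 * \<sigma>) * wd n t
         - (lam n)\<^sup>2 * gamma c0 c1 c2 \<delta> \<sigma> (eps n) (lam n) t * w n t)) (at t within {0..})"
  shows "uniform_limit {0..} (\<lambda>n t. gamma c0 c1 c2 \<delta> \<sigma> (eps n) (lam n) t) c0 sequentially
    \<and> limsup (\<lambda>n. Hold \<alpha> (gamma c0 c1 c2 \<delta> \<sigma> (eps n) (lam n)))
        \<le> max (Hold \<alpha> c0) (ereal (2 * \<mu>2 powr (\<alpha> / 2)) * limsup (\<lambda>n. ereal (eps n * lam n powr \<alpha>)))
    \<and> (\<forall>\<^sub>F n in sequentially. \<forall>t\<ge>0.
        (wd n t)\<^sup>2 + (lam n)\<^sup>2 * (w n t)\<^sup>2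
          \<ge> (\<mu>1 * min 1 \<mu>1 / (2 * \<mu>2\<^sup>2))
             * exp ((1 / (4 * sqrt \<mu>2)) * eps n * lam n * t - 2 * \<delta> * lam n powr (2 * \<sigma>) * t))"
proof -
  obtain M where "\<forall>t\<ge>0. \<bar>c1 t\<bar> + \<bar>c2 t\<bar> + \<bar>c3 t\<bar> \<le> M"
    using deriv_bdd by blast
  then interpret smooth_coefficient \<mu>1 \<mu>2 M c0 c1 c2 c3
    by unfold_locales (use mu d1 d2 d3 c0_bounds in auto)
  show ?thesis
    using uniform_limit_gamma[OF lam_pos lam_lim eps_pos eps_lim sigma(2)]
      limsup_Hold_gamma_le[OF lam_pos lam_lim eps_pos eps_lim alpha limsup_fin]
      eventually_energy_growth[OF lam_pos lam_lim eps_pos eps_lim delta sigma(2) w_init w_deriv w_ode]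
    by blast
qed

end
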